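(* Let $K\ge 3$, $d_2,\dots,d_K\ge 2$, $k\ge 1$ and $d_1=d_2\cdots d_K-k\ge 1$. If $\mathbb{C}^{k}\otimes\mathbb{C}^{d_2}\otimes\cdots\otimes\mathbb{C}^{d_K}$ has only finitely many SLOCC equivalence classes, then $\mathbb{C}^{d_1}\otimes\mathbb{C}^{d_2}\otimes\cdots\otimes\mathbb{C}^{d_K}$ has only finitely many SLOCC equivalence classes of SLOCC maximal states.
   Context: For a multipartite space $\mathbb{C}^{e_1}\otimes\cdots\otimes\mathbb{C}^{e_m}$ with parties the tensor factors, $|\psi\rangle\le_{\mathrm{SLOCC}}|\phi\rangle$ means $(L_1\otimes\cdots\otimes L_m)|\phi\rangle=|\psi\rangle$ for some linear operators $L_i$ on $\mathbb{C}^{e_i}$; two states are SLOCC equivalent if each is $\le_{\mathrm{SLOCC}}$ the other (equivalently, related by $L_1\otimes\cdots\otimes L_m$ with all $L_i$ invertible). A state $|\phi\rangle$ is SLOCC maximal if for every $|\psi\rangle$ in the space, $|\phi\rangle\le_{\mathrm{SLOCC}}|\psi\rangle$ implies $|\psi\rangle\le_{\mathrm{SLOCC}}|\phi\rangle$. *)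

theory Defs
  imports Complex_Main
begin

text \<open>A multipartite space C^{e_1} (x) ... (x) C^{e_m} is described by the list
  e = [e_1, ..., e_m] of local dimensions.\<close>

definition idx :: "nat list \<Rightarrow> (nat \<Rightarrow> nat) set" where
  "idx e = {i. (\<forall>j<length e. i j < e ! j) \<and> (\<forall>j\<ge>length e. i j = 0)}"

definition tspace :: "nat list \<Rightarrow> ((nat \<Rightarrow> nat) \<Rightarrow> complex) set" where
  "tspace e = {T. \<forall>i. i \<notin> idx e \<longrightarrow> T i = 0}"

text \<open>Local operators: L j is the (e!j x e!j) matrix of party j, entries L j a b.
  Applying L_1 (x) ... (x) L_m to T.\<close>
definition apply_local :: "nat list \<Rightarrow> (nat \<Rightarrow> nat \<Rightarrow> nat \<Rightarrow> complex)
    \<Rightarrow> ((nat \<Rightarrow> nat) \<Rightarrow> complex) \<Rightarrow> ((nat \<Rightarrow> nat) \<Rightarrow> complex)" where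
  "apply_local e L T = (\<lambda>i. if i \<in> idx e then
      (\<Sum>i'\<in>idx e. (\<Prod>j<length e. L j (i j) (i' j)) * T i') else 0)"

definition slocc_le :: "nat list \<Rightarrow> ((nat \<Rightarrow> nat) \<Rightarrow> complex) \<Rightarrow> ((nat \<Rightarrow> nat) \<Rightarrow> complex) \<Rightarrow> bool" where
  "slocc_le e psi phi \<longleftrightarrow> (\<exists>L. apply_local e L phi = psi)"

definition slocc_equiv :: "nat list \<Rightarrow> ((nat \<Rightarrow> nat) \<Rightarrow> complex) rel" where
  "slocc_equiv e = {(psi, phi). psi \<in> tspace e \<and> phi \<in> tspace e \<and>
      slocc_le e psi phi \<and> slocc_le e phi psi}"

definition slocc_maximal :: "nat list \<Rightarrow> ((nat \<Rightarrow> nat) \<Rightarrow> complex) \<Rightarrow> bool" where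
  "slocc_maximal e phi \<longleftrightarrow> phi \<in> tspace e \<and>
     (\<forall>psi\<in>tspace e. slocc_le e phi psi \<longrightarrow> slocc_le e psi phi)"

definition finitely_many_classes :: "nat list \<Rightarrow> bool" where
  "finitely_many_classes e \<longleftrightarrow> finite (tspace e // slocc_equiv e)"

definition finitely_many_maximal_classes :: "nat list \<Rightarrow> bool" where
  "finitely_many_maximal_classes e \<longleftrightarrow>
     finite ({phi. slocc_maximal e phi} // slocc_equiv e)"

end

theory Submission
  imports Defs "HOL-Library.Function_Algebras"
begin

(* Proof idea.  Write a state phi of C^d (x) V, where V = C^{e_2} (x) ... (x) C^{e_m} has
   dimension N = e_2 * ... * e_m, through its d rows phi_a in V (fix the first index).

   1. SLOCC operations never increase the rank of the row family (row_rank_mono).  Hence a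
      SLOCC maximal phi with d <= N has linearly independent rows: a dependent row could be
      replaced by a vector outside the span of the others, strictly raising that rank
      (maximal_rows_indep).
   2. For such phi and d + k = N there is a "complement" chi in C^k (x) V whose k rows are
      independent and annihilate the rows of phi under the coordinate pairing <v,w> =
      sum_t v_t w_t (complement_exists).
   3. SLOCC equivalent states are related by local operators that are all invertible
      (slocc_equiv_invertible_ops).  If the complements of maximal phi and psi are related
      by L_1 (x) G with G invertible, the transposed inverse H of G is adjoint to G for the
      pairing, so H maps the rows of psi to d independent vectors annihilating the rows of
      phi's complement.  By dimension count these span the whole annihilator, which
      contains the rows of phi; thus phi <= psi and, by maximality, phi ~ psi
      (maximal_equiv_of_complement_equiv).
   4. Therefore phi |-> [complement of phi] induces an injection from the classes of
      maximal states of C^{d_1} (x) V into the classes of C^k (x) V, and finiteness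
      transfers (finite_quotient_pullback).

   Only d_1 + k = d_2 * ... * d_K with d_1 >= 1 is used. *)

type_synonym state = "(nat \<Rightarrow> nat) \<Rightarrow> complex"
type_synonym local_ops = "nat \<Rightarrow> nat \<Rightarrow> nat \<Rightarrow> complex"

section \<open>Multi-indices\<close>

definition idx_cons :: "nat \<Rightarrow> (nat \<Rightarrow> nat) \<Rightarrow> (nat \<Rightarrow> nat)" where
  "idx_cons a t = (\<lambda>m. case m of 0 \<Rightarrow> a | Suc m' \<Rightarrow> t m')"

lemma idx_cons_0 [simp]: "idx_cons a t 0 = a"
  and idx_cons_Suc [simp]: "idx_cons a t (Suc m) = t m"
  by (auto simp: idx_cons_def)

lemma idx_cons_inj [simp]: "idx_cons a t = idx_cons a' t' \<longleftrightarrow> a = a' \<and> t = t'"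
  by (auto simp: idx_cons_def fun_eq_iff split: nat.splits)

lemma idx_cons_decomp: "idx_cons (i 0) (\<lambda>m. i (Suc m)) = i"
  by (auto simp: idx_cons_def fun_eq_iff split: nat.splits)

lemma idx_Nil: "idx [] = {\<lambda>_. 0}"
  by (auto simp: idx_def)

lemma idx_Cons_iff: "i \<in> idx (d # e) \<longleftrightarrow> i 0 < d \<and> (\<lambda>m. i (Suc m)) \<in> idx e"
  by (auto simp: idx_def less_Suc_eq_0_disj) (metis Suc_le_D Suc_le_mono)

lemma idx_cons_in_idx [simp]: "idx_cons a t \<in> idx (d # e) \<longleftrightarrow> a < d \<and> t \<in> idx e"
  by (simp add: idx_Cons_iff)

lemma idx_Cons: "idx (d # e) = (\<lambda>(a, t). idx_cons a t) ` ({..<d} \<times> idx e)"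
proof (rule set_eqI)
  fix i show "i \<in> idx (d # e) \<longleftrightarrow> i \<in> (\<lambda>(a, t). idx_cons a t) ` ({..<d} \<times> idx e)"
  proof
    assume "i \<in> idx (d # e)"
    then show "i \<in> (\<lambda>(a, t). idx_cons a t) ` ({..<d} \<times> idx e)"
      using idx_cons_decomp[of i] idx_Cons_iff[of i d e]
      by (auto intro!: image_eqI[where x="(i 0, \<lambda>m. i (Suc m))"])
  qed auto
qed

lemma inj_idx_cons: "inj_on (\<lambda>(a, t). idx_cons a t) A"
  by (auto simp: inj_on_def)

lemma finite_idx [simp]: "finite (idx e)"
  by (induction e) (auto simp: idx_Nil idx_Cons)

lemma card_idx: "card (idx e) = prod_list e"
  by (induction e) (auto simp: idx_Nil idx_Cons card_image[OF inj_idx_cons] card_cartesian_product)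

lemma sum_prod_idx:
  fixes f :: "nat \<Rightarrow> nat \<Rightarrow> 'a::comm_semiring_1"
  shows "(\<Sum>i\<in>idx e. \<Prod>j<length e. f j (i j)) = (\<Prod>j<length e. \<Sum>s<e!j. f j s)"
proof (induction e arbitrary: f)
  case Nil then show ?case by (simp add: idx_Nil)
next
  case (Cons d e)
  have "(\<Sum>i\<in>idx (d#e). \<Prod>j<length (d#e). f j (i j))
      = (\<Sum>p\<in>{..<d} \<times> idx e. (\<lambda>i. \<Prod>j<length (d#e). f j (i j)) ((\<lambda>(a,t). idx_cons a t) p))"
    unfolding idx_Cons by (rule sum.reindex[OF inj_idx_cons, unfolded comp_def])
  also have "\<dots> = (\<Sum>a<d. \<Sum>t\<in>idx e. \<Prod>j<Suc (length e). f j (idx_cons a t j))"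
    by (simp add: sum.cartesian_product case_prod_beta del: prod.lessThan_Suc)
  also have "\<dots> = (\<Sum>a<d. \<Sum>t\<in>idx e. f 0 a * (\<Prod>j<length e. f (Suc j) (t j)))"
    by (simp only: prod.lessThan_Suc_shift idx_cons_0 idx_cons_Suc)
  also have "\<dots> = (\<Sum>a<d. f 0 a) * (\<Sum>t\<in>idx e. \<Prod>j<length e. f (Suc j) (t j))"
    unfolding sum_distrib_right by (simp only: sum_distrib_left)
  also have "\<dots> = (\<Prod>j<length (d#e). \<Sum>s<(d#e)!j. f j s)"
    using Cons.IH[of "\<lambda>j. f (Suc j)"]
    by (simp only: length_Cons prod.lessThan_Suc_shift nth_Cons_0 nth_Cons_Suc)
  finally show ?case .
qed

lemma idx_eq_on: "i \<in> idx e \<Longrightarrow> i' \<in> idx e \<Longrightarrow> (\<forall>j<length e. i j = i' j) \<Longrightarrow> i = i'"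
  by (auto simp: idx_def fun_eq_iff) (metis not_le)

section \<open>Local operators\<close>

definition local_id :: local_ops where
  "local_id = (\<lambda>j a b. if a = b then 1 else 0)"

definition local_comp :: "nat list \<Rightarrow> local_ops \<Rightarrow> local_ops \<Rightarrow> local_ops" where
  "local_comp e L M = (\<lambda>j a b. \<Sum>s<e!j. L j a s * M j s b)"

definition local_tcomp :: "nat list \<Rightarrow> local_ops \<Rightarrow> local_ops \<Rightarrow> local_ops" where
  "local_tcomp e L M = (\<lambda>j a b. \<Sum>s<e!j. L j s a * M j s b)"

lemma apply_local_in: "i \<in> idx e \<Longrightarrow>
   apply_local e L T i = (\<Sum>i'\<in>idx e. (\<Prod>j<length e. L j (i j) (i' j)) * T i')"
  by (simp add: apply_local_def)

lemma apply_local_out: "i \<notin> idx e \<Longrightarrow> apply_local e L T i = 0"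
  by (simp add: apply_local_def)

lemma apply_local_tspace [simp]: "apply_local e L T \<in> tspace e"
  by (simp add: tspace_def apply_local_def)

lemma tspace_out: "T \<in> tspace e \<Longrightarrow> i \<notin> idx e \<Longrightarrow> T i = 0"
  by (simp add: tspace_def)

lemma apply_local_cong:
  assumes "\<And>j a b. j < length e \<Longrightarrow> a < e!j \<Longrightarrow> b < e!j \<Longrightarrow> L j a b = L' j a b"
  shows "apply_local e L T = apply_local e L' T"
proof -
  have "(\<Prod>j<length e. L j (i j) (i' j)) = (\<Prod>j<length e. L' j (i j) (i' j))"
    if "i \<in> idx e" "i' \<in> idx e" for i i'
    using that assms by (intro prod.cong) (auto simp: idx_def)
  then show ?thesis by (auto simp: apply_local_def fun_eq_iff intro!: sum.cong)
qed

lemma apply_local_compose: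
  "apply_local e L (apply_local e M T) = apply_local e (local_comp e L M) T"
proof (rule ext)
  fix i
  show "apply_local e L (apply_local e M T) i = apply_local e (local_comp e L M) T i"
  proof (cases "i \<in> idx e")
    case True
    have "apply_local e L (apply_local e M T) i
       = (\<Sum>i''\<in>idx e. \<Sum>i'\<in>idx e. (\<Prod>j<length e. L j (i j) (i'' j)) *
            (\<Prod>j<length e. M j (i'' j) (i' j)) * T i')"
      using True by (simp add: apply_local_in sum_distrib_left mult.assoc)
    also have "\<dots> = (\<Sum>i'\<in>idx e. (\<Sum>i''\<in>idx e.
            (\<Prod>j<length e. L j (i j) (i'' j) * M j (i'' j) (i' j))) * T i')"
      by (subst sum.swap) (simp add: sum_distrib_right prod.distrib)
    also have "\<dots> = apply_local e (local_comp e L M) T i"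
      using True by (simp add: sum_prod_idx[where f="\<lambda>j s. L j (i j) s * M j s (_ j)"]
          local_comp_def apply_local_in)
    finally show ?thesis .
  qed (simp add: apply_local_out)
qed

lemma apply_local_id: "T \<in> tspace e \<Longrightarrow> apply_local e local_id T = T"
proof (rule ext)
  fix i assume T: "T \<in> tspace e"
  show "apply_local e local_id T i = T i"
  proof (cases "i \<in> idx e")
    case True
    have "(\<Prod>j<length e. local_id j (i j) (i' j)) = (if i' = i then 1 else 0)" if "i' \<in> idx e" for i'
      using idx_eq_on[OF True that] by (auto simp: local_id_def)
    then have "apply_local e local_id T i = (\<Sum>i'\<in>idx e. (if i' = i then 1 else 0) * T i')"
      using True by (simp add: apply_local_in cong: sum.cong)
    also have "\<dots> = (\<Sum>i'\<in>idx e. if i' = i then T i' else 0)"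
      by (rule sum.cong) auto
    also have "\<dots> = T i" using True by (simp add: sum.delta')
    finally show ?thesis .
  qed (simp add: apply_local_out tspace_out[OF T])
qed

lemma slocc_le_refl: "T \<in> tspace e \<Longrightarrow> slocc_le e T T"
  unfolding slocc_le_def using apply_local_id by blast

lemma slocc_le_trans: "slocc_le e a b \<Longrightarrow> slocc_le e b c \<Longrightarrow> slocc_le e a c"
  unfolding slocc_le_def using apply_local_compose by metis

lemma equiv_slocc_equiv: "equiv (tspace e) (slocc_equiv e)"
  unfolding equiv_def refl_on_def sym_def trans_def slocc_equiv_def
  by (auto intro: slocc_le_refl slocc_le_trans)

section \<open>Coordinate functions as a complex vector space\<close>

definition cscale :: "complex \<Rightarrow> ('a \<Rightarrow> complex) \<Rightarrow> ('a \<Rightarrow> complex)" where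
  "cscale c f = (\<lambda>x. c * f x)"

interpretation fvs: vector_space cscale
  by unfold_locales (auto simp: cscale_def fun_eq_iff algebra_simps)

interpretation fvsp: vector_space_pair "cscale :: complex \<Rightarrow> ('a \<Rightarrow> complex) \<Rightarrow> _"
  "cscale :: complex \<Rightarrow> ('b \<Rightarrow> complex) \<Rightarrow> _"
  by (rule vector_space_pair.intro) (rule fvs.vector_space_axioms)+

lemma cscale_apply [simp]: "cscale c f x = c * f x"
  by (simp add: cscale_def)

lemma sum_fun_apply: "(\<Sum>i\<in>A. f i) x = (\<Sum>i\<in>A. f i x)"
  by (induction A rule: infinite_finite_induct) auto

lemma apply_local_hom: "module_hom cscale cscale (apply_local e L)"
  unfolding module_hom_iff_linear Vector_Spaces.linear_iff
  by (auto simp: fvs.vector_space_axioms apply_local_def fun_eq_iff sum_distrib_left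
      distrib_left sum.distrib algebra_simps)

lemma tspace_sum: "(\<And>a. a \<in> A \<Longrightarrow> f a \<in> tspace e) \<Longrightarrow> (\<Sum>a\<in>A. f a) \<in> tspace e"
  by (induction A rule: infinite_finite_induct) (auto simp: tspace_def)

lemma tspace_cscale [simp]: "v \<in> tspace e \<Longrightarrow> cscale c v \<in> tspace e"
  and tspace_diff [simp]: "v \<in> tspace e \<Longrightarrow> w \<in> tspace e \<Longrightarrow> v - w \<in> tspace e"
  by (auto simp: tspace_def)

definition coord_vec :: "(nat \<Rightarrow> nat) \<Rightarrow> state" where
  "coord_vec t = (\<lambda>s. if s = t then 1 else 0)"

lemma inj_coord_vec: "inj coord_vec"
  by (auto simp: inj_on_def coord_vec_def fun_eq_iff)

lemma coord_vec_tspace: "t \<in> idx e \<Longrightarrow> coord_vec t \<in> tspace e"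
  by (auto simp: tspace_def coord_vec_def)

lemma tspace_expand: assumes "v \<in> tspace e" shows "v = (\<Sum>t\<in>idx e. cscale (v t) (coord_vec t))"
proof (rule ext)
  fix s
  have "(\<Sum>t\<in>idx e. cscale (v t) (coord_vec t)) s = (\<Sum>t\<in>idx e. if t = s then v t else 0)"
    unfolding sum_fun_apply by (rule sum.cong) (auto simp: coord_vec_def)
  also have "\<dots> = v s" using tspace_out[OF assms] by (auto simp: sum.delta')
  finally show "v s = (\<Sum>t\<in>idx e. cscale (v t) (coord_vec t)) s" by simp
qed

lemma tspace_span_coord_vec: "tspace e \<subseteq> fvs.span (coord_vec ` idx e)"
proof
  fix v assume v: "v \<in> tspace e"
  show "v \<in> fvs.span (coord_vec ` idx e)"
    by (subst tspace_expand[OF v], rule fvs.span_sum, rule fvs.span_scale, rule fvs.span_base) auto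
qed

lemma indep_coord_vec: "fvs.independent (coord_vec ` A)" if "finite A"
proof -
  have "u v = 0" if "v \<in> coord_vec ` A" "(\<Sum>v\<in>coord_vec ` A. cscale (u v) v) = 0" for u v
  proof -
    from that obtain t where t: "t \<in> A" "v = coord_vec t" by auto
    have "(\<Sum>v\<in>coord_vec ` A. cscale (u v) v) t = (\<Sum>s\<in>A. cscale (u (coord_vec s)) (coord_vec s) t)"
      by (simp add: sum_fun_apply sum.reindex[OF inj_on_subset[OF inj_coord_vec]])
    also have "\<dots> = (\<Sum>s\<in>A. if s = t then u (coord_vec s) else 0)"
      by (rule sum.cong) (auto simp: coord_vec_def)
    also have "\<dots> = u (coord_vec t)" using \<open>finite A\<close> t(1) by (simp add: sum.delta')
    finally show ?thesis using that(2) t by simp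
  qed
  then show ?thesis using \<open>finite A\<close> by (auto simp: fvs.dependent_finite)
qed

lemma card_coord_vec: "card (coord_vec ` idx e) = prod_list e"
  by (simp add: card_image[OF inj_on_subset[OF inj_coord_vec]] card_idx)

lemma coord_vec_notin_span:
  assumes "finite Z" "card Z < prod_list e"
  obtains t where "t \<in> idx e" "coord_vec t \<notin> fvs.span Z"
proof -
  have "\<not> coord_vec ` idx e \<subseteq> fvs.span Z"
  proof
    assume "coord_vec ` idx e \<subseteq> fvs.span Z"
    then have "card (coord_vec ` idx e) \<le> card Z"
      using fvs.independent_span_bound[OF assms(1) indep_coord_vec[OF finite_idx]] by auto
    then show False using assms(2) by (simp add: card_coord_vec)
  qed
  then show ?thesis using that by blast
qed

section \<open>The coordinate pairing\<close>

definition pairing :: "nat list \<Rightarrow> state \<Rightarrow> state \<Rightarrow> complex" where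
  "pairing e v w = (\<Sum>t\<in>idx e. v t * w t)"

lemma pairing_cscale_l [simp]: "pairing e (cscale c v) w = c * pairing e v w"
  and pairing_cscale_r [simp]: "pairing e v (cscale c w) = c * pairing e v w"
  and pairing_add_l [simp]: "pairing e (v + v') w = pairing e v w + pairing e v' w"
  and pairing_add_r [simp]: "pairing e v (w + w') = pairing e v w + pairing e v w'"
  and pairing_diff_l [simp]: "pairing e (v - v') w = pairing e v w - pairing e v' w"
  and pairing_diff_r [simp]: "pairing e v (w - w') = pairing e v w - pairing e v w'"
  and pairing_zero_l [simp]: "pairing e 0 w = 0"
  by (auto simp: pairing_def sum_distrib_left algebra_simps sum.distrib sum_subtractf)

lemma pairing_sum_l: "pairing e (\<Sum>a\<in>A. f a) w = (\<Sum>a\<in>A. pairing e (f a) w)"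
  by (simp add: pairing_def sum_fun_apply sum_distrib_right) (rule sum.swap)

lemma pairing_sum_r: "pairing e v (\<Sum>a\<in>A. f a) = (\<Sum>a\<in>A. pairing e v (f a))"
  by (simp add: pairing_def sum_fun_apply sum_distrib_left) (rule sum.swap)

lemma pairing_comm: "pairing e v w = pairing e w v"
  by (simp add: pairing_def mult.commute)

lemma pairing_coord_vec: assumes "t \<in> idx e" shows "pairing e (coord_vec t) v = v t"
proof -
  have "pairing e (coord_vec t) v = (\<Sum>s\<in>idx e. if s = t then v s else 0)"
    unfolding pairing_def coord_vec_def by (rule sum.cong) auto
  also have "\<dots> = v t" using assms by (simp add: sum.delta')
  finally show ?thesis .
qed

lemma pairing_nondeg:
  assumes "v \<in> tspace e" "\<And>w. w \<in> tspace e \<Longrightarrow> pairing e w v = 0"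
  shows "v = 0"
proof (rule ccontr)
  assume "v \<noteq> 0"
  then obtain t where "t \<in> idx e" "v t \<noteq> 0"
    using tspace_out[OF assms(1)] by (auto simp: fun_eq_iff)
  then show False using assms(2)[OF coord_vec_tspace] pairing_coord_vec by metis
qed

lemma pairing_apply_local:
  "pairing e (apply_local e A v) (apply_local e B w) = pairing e v (apply_local e (local_tcomp e A B) w)"
proof -
  have "pairing e (apply_local e A v) (apply_local e B w)
     = (\<Sum>t\<in>idx e. \<Sum>t'\<in>idx e. \<Sum>t''\<in>idx e. v t' * ((\<Prod>j<length e. A j (t j) (t' j)) *
           (\<Prod>j<length e. B j (t j) (t'' j)) * w t''))"
    by (simp add: pairing_def apply_local_in sum_product mult_ac)
  also have "\<dots> = (\<Sum>t'\<in>idx e. \<Sum>t''\<in>idx e. \<Sum>t\<in>idx e. v t' * ((\<Prod>j<length e. A j (t j) (t' j)) *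
           (\<Prod>j<length e. B j (t j) (t'' j)) * w t''))"
    by (subst sum.swap) (rule sum.cong[OF refl], rule sum.swap)
  also have "\<dots> = (\<Sum>t'\<in>idx e. v t' * (\<Sum>t''\<in>idx e.
        (\<Sum>t\<in>idx e. \<Prod>j<length e. A j (t j) (t' j) * B j (t j) (t'' j)) * w t''))"
    by (simp add: sum_distrib_left sum_distrib_right prod.distrib)
  also have "\<dots> = pairing e v (apply_local e (local_tcomp e A B) w)"
    by (simp add: sum_prod_idx[where f="\<lambda>j s. A j s (_ j) * B j s (_ j)"] local_tcomp_def
        pairing_def apply_local_in)
  finally show ?thesis .
qed

section \<open>Finite families of vectors\<close>

text \<open>A family \<open>x 0, \<dots>, x (n - 1)\<close> is linearly independent.  Indexed families (rather
  than sets) are convenient because rows of states are indexed families.\<close>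

definition indep_fam :: "nat \<Rightarrow> (nat \<Rightarrow> 'a \<Rightarrow> complex) \<Rightarrow> bool" where
  "indep_fam n x \<longleftrightarrow> (\<forall>c. (\<Sum>a<n. cscale (c a) (x a)) = 0 \<longrightarrow> (\<forall>a<n. c a = 0))"

lemma indep_fam_zero_comb:
  "indep_fam n x \<Longrightarrow> (\<Sum>a<n. cscale (c a) (x a)) = 0 \<Longrightarrow> b < n \<Longrightarrow> c b = 0"
  unfolding indep_fam_def by blast

lemma indep_fam_inj: assumes "indep_fam n x" shows "inj_on x {..<n}"
proof (rule inj_onI, rule ccontr)
  fix a b assume ab: "a \<in> {..<n}" "b \<in> {..<n}" "x a = x b" "a \<noteq> b"
  define c where "c = (\<lambda>i. if i = a then (1::complex) else if i = b then -1 else 0)"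
  have "(\<Sum>i<n. cscale (c i) (x i)) = (\<Sum>i\<in>{a,b}. cscale (c i) (x i))"
    by (rule sum.mono_neutral_right) (use ab in \<open>auto simp: c_def\<close>)
  also have "\<dots> = 0" using ab by (simp add: c_def fun_eq_iff cscale_def)
  finally have "c a = 0" using indep_fam_zero_comb[OF assms] ab by blast
  then show False by (simp add: c_def)
qed

lemma indep_fam_indep: assumes "indep_fam n x" shows "fvs.independent (x ` {..<n})"
proof -
  have inj: "inj_on x {..<n}" by (rule indep_fam_inj[OF assms])
  have "u v = 0" if "v \<in> x ` {..<n}" "(\<Sum>v\<in>x ` {..<n}. cscale (u v) v) = 0" for u v
  proof -
    have "(\<Sum>a<n. cscale (u (x a)) (x a)) = 0"
      using that(2) by (simp add: sum.reindex[OF inj])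
    then show ?thesis using that(1) indep_fam_zero_comb[OF assms] by auto
  qed
  then show ?thesis by (auto simp: fvs.dependent_finite)
qed

lemma indep_fam_of_indep:
  assumes "inj_on x {..<n}" "fvs.independent (x ` {..<n})" shows "indep_fam n x"
  unfolding indep_fam_def
proof (rule allI, rule impI)
  fix c assume c: "(\<Sum>a<n. cscale (c a) (x a)) = 0"
  define u where "u v = c (the_inv_into {..<n} x v)" for v
  have "(\<Sum>v\<in>x ` {..<n}. cscale (u v) v) = (\<Sum>a<n. cscale (c a) (x a))"
    by (simp add: sum.reindex[OF assms(1)] u_def the_inv_into_f_f[OF assms(1)])
  then have "\<forall>v\<in>x ` {..<n}. u v = 0" using c assms(2) by (auto simp: fvs.dependent_finite)
  then show "\<forall>a<n. c a = 0" by (auto simp: u_def the_inv_into_f_f[OF assms(1)])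
qed

lemma indep_fam_from_set:
  assumes "finite B" "fvs.independent B" "k \<le> card B"
  obtains h where "indep_fam k h" "h ` {..<k} \<subseteq> B"
proof -
  obtain h where h: "bij_betw h {0..<card B} B" using ex_bij_betw_nat_finite[OF assms(1)] by blast
  have injh: "inj_on h {..<k}"
    using bij_betw_imp_inj_on[OF h] assms(3) by (auto intro: inj_on_subset)
  have hB: "h ` {..<k} \<subseteq> B" using bij_betw_imp_surj_on[OF h] assms(3) by auto
  show ?thesis
    by (rule that[OF indep_fam_of_indep[OF injh fvs.independent_mono[OF assms(2) hB]] hB])
qed

lemma steinitz_tspace:
  assumes "indep_fam n x" "\<And>a. a < n \<Longrightarrow> x a \<in> tspace e"
  shows "n \<le> prod_list e"
proof -
  have "x ` {..<n} \<subseteq> fvs.span (coord_vec ` idx e)" using assms(2) tspace_span_coord_vec by auto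
  then have "card (x ` {..<n}) \<le> card (coord_vec ` idx e)"
    using fvs.independent_span_bound[OF _ indep_fam_indep[OF assms(1)]] by auto
  then show ?thesis using card_image[OF indep_fam_inj[OF assms(1)]] by (simp add: card_coord_vec)
qed

lemma span_fam: "(\<And>a. a < (n::nat) \<Longrightarrow> x a \<in> fvs.span Y) \<Longrightarrow> (\<Sum>a<n. cscale (c a) (x a)) \<in> fvs.span Y"
  by (auto intro!: fvs.span_sum fvs.span_scale)

lemma span_fam_explicit: "v \<in> fvs.span (x ` {..<(n::nat)}) \<Longrightarrow> \<exists>c. v = (\<Sum>a<n. cscale (c a) (x a))"
proof (induction rule: fvs.span_induct_alt)
  case base
  have "(0::'a \<Rightarrow> complex) = (\<Sum>a<n. cscale 0 (x a))" by (simp add: fvs.scale_zero_left)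
  then show ?case by (rule exI[where x="\<lambda>_. 0"])
next
  case (step c' y z)
  from step(2) obtain c where c: "z = (\<Sum>a<n. cscale (c a) (x a))" by blast
  from step(1) obtain b where b: "b < n" "y = x b" by blast
  have "cscale c' y + z = (\<Sum>a<n. cscale ((c(b := c b + c')) a) (x a))"
  proof (rule ext)
    fix s
    have "(\<Sum>a<n. cscale ((c(b := c b + c')) a) (x a)) s
        = (\<Sum>a<n. c a * x a s) + (\<Sum>a<n. if a = b then c' * x b s else 0)"
      unfolding sum_fun_apply sum.distrib[symmetric] by (rule sum.cong) (auto simp: algebra_simps)
    also have "(\<Sum>a<n. if a = b then c' * x b s else 0) = c' * x b s"
      using b(1) by (subst sum.delta) simp_all
    finally show "(cscale c' y + z) s = (\<Sum>a<n. cscale ((c(b := c b + c')) a) (x a)) s"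
      by (simp add: c b sum_fun_apply)
  qed
  then show ?case by blast
qed

lemma sum_delta_fun: "b < n \<Longrightarrow> (\<Sum>a<(n::nat). r a * (if b = a then 1 else 0)) = (r b :: complex)"
  by (simp add: if_distrib sum.delta' cong: if_cong)

lemma sum_delta_fun': "b < n \<Longrightarrow> (\<Sum>a<(n::nat). r a * (if a = b then 1 else 0)) = (r b :: complex)"
  by (simp add: if_distrib sum.delta cong: if_cong)

lemma dependent_fam_in_span:
  assumes "\<not> indep_fam n x"
  obtains a0 where "a0 < n" "x a0 \<in> fvs.span (x ` ({..<n} - {a0}))"
proof -
  obtain c a0 where c0: "(\<Sum>a<n. cscale (c a) (x a)) = 0" and a0: "a0 < n" "c a0 \<noteq> 0"
    using assms unfolding indep_fam_def by blast
  define S where "S = fvs.span (x ` ({..<n} - {a0}))"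
  have "(\<Sum>a<n. cscale (c a) (x a)) = cscale (c a0) (x a0) + (\<Sum>a\<in>{..<n} - {a0}. cscale (c a) (x a))"
    using a0 by (simp add: sum.remove)
  then have "cscale (c a0) (x a0) = - (\<Sum>a\<in>{..<n} - {a0}. cscale (c a) (x a))"
    using c0 by (simp add: eq_neg_iff_add_eq_0)
  also have "\<dots> \<in> S" unfolding S_def by (intro fvs.span_neg fvs.span_sum fvs.span_scale fvs.span_base) auto
  finally have "cscale (1 / c a0) (cscale (c a0) (x a0)) \<in> S"
    unfolding S_def by (rule fvs.span_scale)
  then have "x a0 \<in> S" using a0(2) by (simp add: fvs.scale_scale)
  then show ?thesis using that a0(1) by (simp add: S_def)
qed

lemma indep_fam_extend:
  assumes y: "indep_fam m y" and u: "u \<notin> fvs.span (y ` {..<m})"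
  shows "indep_fam (Suc m) (y(m := u))"
  unfolding indep_fam_def
proof (rule allI, rule impI)
  fix c assume "(\<Sum>a<Suc m. cscale (c a) ((y(m := u)) a)) = 0"
  moreover have "(\<Sum>a<m. cscale (c a) ((y(m := u)) a)) = (\<Sum>a<m. cscale (c a) (y a))"
    by (rule sum.cong) auto
  ultimately have S: "(\<Sum>a<m. cscale (c a) (y a)) + cscale (c m) u = 0" by simp
  have cm: "c m = 0"
  proof (rule ccontr)
    assume cm: "c m \<noteq> 0"
    have "cscale (c m) u = - (\<Sum>a<m. cscale (c a) (y a))" using S by (simp add: eq_neg_iff_add_eq_0 add.commute)
    also have "\<dots> \<in> fvs.span (y ` {..<m})" by (intro fvs.span_neg span_fam fvs.span_base) auto
    finally have "cscale (1 / c m) (cscale (c m) u) \<in> fvs.span (y ` {..<m})"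
      using fvs.span_scale by blast
    then show False using u cm by (simp add: fvs.scale_scale)
  qed
  then have "\<forall>a<m. c a = 0" using S indep_fam_zero_comb[OF y] by (simp add: fvs.scale_zero_left)
  then show "\<forall>a<Suc m. c a = 0" using cm less_Suc_eq by auto
qed

lemma indep_fam_less: assumes "indep_fam (Suc n) x" shows "indep_fam n x"
  unfolding indep_fam_def
proof (rule allI, rule impI)
  fix c assume c: "(\<Sum>a<n. cscale (c a) (x a)) = 0"
  have "(\<Sum>a<n. cscale ((c(n:=0)) a) (x a)) = (\<Sum>a<n. cscale (c a) (x a))"
    by (rule sum.cong) auto
  then have "(\<Sum>a<Suc n. cscale ((c(n:=0)) a) (x a)) = 0"
    using c by (simp add: fvs.scale_zero_left)
  then have "\<forall>a<Suc n. (c(n:=0)) a = 0" using indep_fam_zero_comb[OF assms] by blast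
  then show "\<forall>a<n. c a = 0" by (metis fun_upd_apply less_Suc_eq nat_neq_iff)
qed

text \<open>Remove from \<open>x k\<close> its components along the earlier \<open>x b\<close>; the nonzero
  remainder \<open>z\<close> is orthogonal to the \<open>y' a\<close>, and a suitably corrected coordinate vector
  does the job.\<close>

lemma dual_vector_step:
  assumes xI: "indep_fam (Suc k) x" and xT: "\<And>a. a < Suc k \<Longrightarrow> x a \<in> tspace e"
    and y'T: "\<And>a. a < k \<Longrightarrow> y' a \<in> tspace e"
    and y'd: "\<And>a b. a < k \<Longrightarrow> b < k \<Longrightarrow> pairing e (y' a) (x b) = (if a = b then 1 else 0)"
  obtains f where "f \<in> tspace e" "\<And>a. a < k \<Longrightarrow> pairing e f (x a) = 0" "pairing e f (x k) = 1"
proof -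
  define r where "r b = pairing e (y' b) (x k)" for b
  define z where "z = x k - (\<Sum>b<k. cscale (r b) (x b))"
  have zT: "z \<in> tspace e" unfolding z_def by (intro tspace_diff tspace_sum tspace_cscale) (auto intro: xT)
  have z_ne: "z \<noteq> 0"
  proof
    assume z0: "z = 0"
    define c where "c a = (if a = k then 1 else - r a)" for a
    have "(\<Sum>a<Suc k. cscale (c a) (x a)) = z"
      by (simp add: c_def z_def fvs.scale_minus_left sum_negf)
    then have "c k = 0" using indep_fam_zero_comb[OF xI] z0 by blast
    then show False by (simp add: c_def)
  qed
  have pz: "pairing e (y' a) z = 0" if "a < k" for a
    using that by (simp add: z_def pairing_sum_r y'd r_def sum_delta_fun)
  from z_ne zT obtain t where t: "t \<in> idx e" "z t \<noteq> 0"
    using tspace_out[OF zT] by (auto simp: fun_eq_iff)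
  define f where "f = cscale (1 / z t) (coord_vec t - (\<Sum>b<k. cscale (x b t) (y' b)))"
  have fT: "f \<in> tspace e" unfolding f_def
    by (intro tspace_diff tspace_sum tspace_cscale) (auto intro: y'T coord_vec_tspace[OF t(1)])
  have fx: "pairing e f (x a) = 0" if "a < k" for a
  proof -
    have "pairing e (\<Sum>b<k. cscale (x b t) (y' b)) (x a) = x a t"
      using that by (simp add: pairing_sum_l y'd sum_delta_fun')
    then show ?thesis by (simp add: f_def pairing_coord_vec[OF t(1)])
  qed
  have "pairing e (\<Sum>b<k. cscale (x b t) (y' b)) z = 0" by (simp add: pairing_sum_l pz)
  then have "pairing e f z = 1" using t(2) by (simp add: f_def pairing_coord_vec[OF t(1)])
  moreover have "x k = z + (\<Sum>b<k. cscale (r b) (x b))" by (simp add: z_def)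
  ultimately have "pairing e f (x k) = 1" by (simp add: pairing_sum_r fx)
  then show ?thesis using that fT fx by blast
qed

lemma dual_family:
  assumes "indep_fam k x" "\<And>a. a < k \<Longrightarrow> x a \<in> tspace e"
  shows "\<exists>y. (\<forall>a<k. y a \<in> tspace e) \<and> (\<forall>a<k. \<forall>b<k. pairing e (y a) (x b) = (if a = b then 1 else 0))"
  using assms
proof (induction k)
  case 0 then show ?case by auto
next
  case (Suc k)
  from Suc.IH[OF indep_fam_less[OF Suc.prems(1)] Suc.prems(2)] obtain y' where
    y'T: "\<And>a. a < k \<Longrightarrow> y' a \<in> tspace e" and
    y'd: "\<And>a b. a < k \<Longrightarrow> b < k \<Longrightarrow> pairing e (y' a) (x b) = (if a = b then 1 else 0)"
    by auto
  obtain f where fT: "f \<in> tspace e" and fx: "\<And>a. a < k \<Longrightarrow> pairing e f (x a) = 0"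
    and fxk: "pairing e f (x k) = 1"
    using dual_vector_step[OF Suc.prems y'T y'd] by blast
  txt \<open>Correct the old dual vectors so that they kill \<open>x k\<close>.\<close>
  define y where "y a = (if a = k then f else y' a - cscale (pairing e (y' a) (x k)) f)" for a
  show ?case
  proof (intro exI[of _ y] conjI allI impI)
    fix a assume "a < Suc k"
    then show "y a \<in> tspace e" using fT y'T by (auto simp: y_def)
  next
    fix a b assume ab: "a < Suc k" "b < Suc k"
    show "pairing e (y a) (x b) = (if a = b then 1 else 0)"
    proof (cases "a = k")
      case True
      then show ?thesis using ab fx fxk by (cases "b = k") (auto simp: y_def)
    next
      case False
      then have "a < k" using ab by simp
      then show ?thesis using ab fx fxk y'd by (cases "b = k") (auto simp: y_def)
    qed
  qed
qed

text \<open>The annihilator of \<open>m\<close> independent states in a space of dimension \<open>m + k\<close> contains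
  \<open>k\<close> independent vectors: the projection \<open>P\<close> onto the annihilator along a dual family
  maps the standard basis to a set which, together with the dual family, spans everything.\<close>

lemma annihilator_large:
  assumes "indep_fam m w" "\<And>a. a < m \<Longrightarrow> w a \<in> tspace e" "m + k = prod_list e"
  obtains B where "finite B" "fvs.independent B" "k \<le> card B"
    "\<And>u. u \<in> B \<Longrightarrow> u \<in> tspace e \<and> (\<forall>a<m. pairing e (w a) u = 0)"
proof -
  obtain ee where eeT: "\<And>a. a < m \<Longrightarrow> ee a \<in> tspace e"
    and eed: "\<And>a b. a < m \<Longrightarrow> b < m \<Longrightarrow> pairing e (ee a) (w b) = (if a = b then 1 else 0)"
    using dual_family[OF assms(1,2)] by blast
  define P where "P v = v - (\<Sum>a<m. cscale (pairing e (w a) v) (ee a))" for v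
  have PT: "v \<in> tspace e \<Longrightarrow> P v \<in> tspace e" for v
    unfolding P_def by (intro tspace_diff tspace_sum tspace_cscale) (auto intro: eeT)
  have Pw: "pairing e (w b) (P v) = 0" if "b < m" for b v
  proof -
    have "pairing e (w b) (\<Sum>a<m. cscale (pairing e (w a) v) (ee a)) = pairing e (w b) v"
      using that by (simp add: pairing_sum_r pairing_comm[of e "w b" "ee _"] eed sum_delta_fun')
    then show ?thesis by (simp add: P_def)
  qed
  define Z where "Z = P ` coord_vec ` idx e"
  obtain B where B: "B \<subseteq> Z" "fvs.independent B" "Z \<subseteq> fvs.span B"
    using fvs.maximal_independent_subset[of Z] by blast
  have finB: "finite B" using B(1) by (rule finite_subset) (simp add: Z_def)
  have "coord_vec ` idx e \<subseteq> fvs.span (B \<union> ee ` {..<m})"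
  proof
    fix v assume "v \<in> coord_vec ` idx e"
    then have "P v \<in> fvs.span (B \<union> ee ` {..<m})"
      using B(3) fvs.span_mono[of B "B \<union> ee ` {..<m}"] by (auto simp: Z_def)
    moreover have "(\<Sum>a<m. cscale (pairing e (w a) v) (ee a)) \<in> fvs.span (B \<union> ee ` {..<m})"
      by (rule span_fam) (auto intro: fvs.span_base)
    ultimately have "P v + (\<Sum>a<m. cscale (pairing e (w a) v) (ee a)) \<in> fvs.span (B \<union> ee ` {..<m})"
      by (rule fvs.span_add)
    then show "v \<in> fvs.span (B \<union> ee ` {..<m})" by (simp add: P_def)
  qed
  then have "card (coord_vec ` idx e) \<le> card (B \<union> ee ` {..<m})"
    using fvs.independent_span_bound[OF _ indep_coord_vec[OF finite_idx]] finB by auto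
  also have "\<dots> \<le> card B + m"
    using card_Un_le[of B "ee ` {..<m}"] card_image_le[of "{..<m}" ee] by simp
  finally have "k \<le> card B" using assms(3) by (simp add: card_coord_vec)
  moreover have "u \<in> tspace e \<and> (\<forall>a<m. pairing e (w a) u = 0)" if "u \<in> B" for u
    using that B(1) PT coord_vec_tspace Pw by (auto simp: Z_def)
  ultimately show ?thesis using that finB B(2) by blast
qed

lemma annihilator_exists:
  assumes "indep_fam m w" "\<And>a. a < m \<Longrightarrow> w a \<in> tspace e" "m + k = prod_list e"
  shows "\<exists>x. indep_fam k x \<and> (\<forall>b<k. x b \<in> tspace e) \<and> (\<forall>a<m. \<forall>b<k. pairing e (w a) (x b) = 0)"
proof -
  obtain B where B: "finite B" "fvs.independent B" "k \<le> card B"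
    "\<And>u. u \<in> B \<Longrightarrow> u \<in> tspace e \<and> (\<forall>a<m. pairing e (w a) u = 0)"
    using annihilator_large[OF assms] by blast
  obtain h where "indep_fam k h" "h ` {..<k} \<subseteq> B" using indep_fam_from_set[OF B(1-3)] by blast
  then show ?thesis using B(4) by (intro exI[of _ h]) auto
qed

lemma sum_lessThan_add: "(\<Sum>i<a+b. g i) = (\<Sum>i<a. g i) + (\<Sum>j<(b::nat). g (a+j))"
  by (induction b) (simp_all add: add.assoc)

lemma indep_fam_append_dual:
  assumes y: "indep_fam m y"
    and yx: "\<And>a b. a < m \<Longrightarrow> b < k \<Longrightarrow> pairing e (y a) (x b) = 0"
    and dual: "\<And>a b. a < k \<Longrightarrow> b < k \<Longrightarrow> pairing e (ee a) (x b) = (if a = b then 1 else 0)"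
  shows "indep_fam (m + k) (\<lambda>i. if i < m then y i else ee (i - m))"
  unfolding indep_fam_def
proof (rule allI, rule impI)
  fix c assume S0: "(\<Sum>i<m + k. cscale (c i) (if i < m then y i else ee (i - m))) = 0"
  define A where "A = (\<Sum>i<m. cscale (c i) (y i))"
  define C where "C = (\<Sum>j<k. cscale (c (m + j)) (ee j))"
  have "A + C = 0" using S0 unfolding sum_lessThan_add A_def C_def by simp
  have cC: "c (m + l) = 0" if "l < k" for l
  proof -
    have "pairing e A (x l) = 0" by (simp add: A_def pairing_sum_l yx that)
    moreover have "pairing e C (x l) = c (m + l)"
      using that by (simp add: C_def pairing_sum_l dual sum_delta_fun')
    ultimately show ?thesis using \<open>A + C = 0\<close> pairing_add_l[of e A C "x l"] by simp
  qed
  then have "C = 0" unfolding C_def by (simp add: fvs.scale_zero_left)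
  then have "\<forall>i<m. c i = 0" using \<open>A + C = 0\<close> indep_fam_zero_comb[OF y] by (simp add: A_def)
  then show "\<forall>i<m + k. c i = 0" using cC by (metis add_diff_inverse_nat nat_add_left_cancel_less)
qed

lemma annihilator_span:
  assumes xI: "indep_fam k x" and xT: "\<And>b. b < k \<Longrightarrow> x b \<in> tspace e"
    and yI: "indep_fam m y" and yT: "\<And>a. a < m \<Longrightarrow> y a \<in> tspace e"
    and yx: "\<And>a b. a < m \<Longrightarrow> b < k \<Longrightarrow> pairing e (y a) (x b) = 0"
    and dim: "m + k = prod_list e"
    and uT: "u \<in> tspace e" and ux: "\<And>b. b < k \<Longrightarrow> pairing e u (x b) = 0"
  shows "u \<in> fvs.span (y ` {..<m})"
proof (rule ccontr)
  assume "u \<notin> fvs.span (y ` {..<m})"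
  then have y'I: "indep_fam (Suc m) (y(m := u))" by (rule indep_fam_extend[OF yI])
  obtain ee where eeT: "\<And>a. a < k \<Longrightarrow> ee a \<in> tspace e"
    and eed: "\<And>a b. a < k \<Longrightarrow> b < k \<Longrightarrow> pairing e (ee a) (x b) = (if a = b then 1 else 0)"
    using dual_family[OF xI xT] by blast
  have "indep_fam (Suc m + k) (\<lambda>i. if i < Suc m then (y(m := u)) i else ee (i - Suc m))"
    by (rule indep_fam_append_dual[OF y'I _ eed]) (auto simp: yx ux less_Suc_eq)
  then have "Suc m + k \<le> prod_list e"
    by (rule steinitz_tspace) (auto simp: yT uT eeT)
  then show False using dim by simp
qed

lemma dim_hom_image_le:
  assumes hom: "module_hom cscale cscale G" and "finite S"
  shows "fvs.dim (G ` S) \<le> fvs.dim S"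
proof -
  obtain B where B: "B \<subseteq> S" "fvs.independent B" "S \<subseteq> fvs.span B" "card B = fvs.dim S"
    using fvs.basis_exists[of S] by blast
  have "G ` S \<subseteq> G ` fvs.span B" using B(3) by blast
  also have "\<dots> = fvs.span (G ` B)" using module_hom.span_image[OF hom] by simp
  finally have "fvs.dim (G ` S) \<le> card (G ` B)"
    using fvs.dim_le_card finite_subset[OF B(1) \<open>finite S\<close>] by blast
  also have "\<dots> \<le> card B" using card_image_le finite_subset[OF B(1) \<open>finite S\<close>] by blast
  finally show ?thesis using B(4) by simp
qed

lemma dim_mono_finite:
  assumes "V \<subseteq> fvs.span W" "finite W"
  shows "fvs.dim V \<le> fvs.dim W"
proof -
  obtain B where B: "B \<subseteq> W" "fvs.independent B" "W \<subseteq> fvs.span B" "card B = fvs.dim W"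
    using fvs.basis_exists[of W] by blast
  have "V \<subseteq> fvs.span B" using assms(1) B(3) fvs.span_mono fvs.span_span by blast
  then show ?thesis using fvs.dim_le_card finite_subset[OF B(1) assms(2)] B(4) by metis
qed

lemma dim_insert_finite:
  assumes "finite S" "x \<notin> fvs.span S"
  shows "fvs.dim (insert x S) = Suc (fvs.dim S)"
proof -
  obtain B where B: "B \<subseteq> S" "fvs.independent B" "S \<subseteq> fvs.span B" "card B = fvs.dim S"
    using fvs.basis_exists[of S] by blast
  have finB: "finite B" using finite_subset[OF B(1) assms(1)] .
  have "x \<notin> fvs.span B" using assms(2) fvs.span_mono[OF B(1)] by blast
  then have "fvs.independent (insert x B)" "x \<notin> B"
    using fvs.independent_insertI[OF _ B(2)] fvs.span_base by blast+
  moreover have "insert x S \<subseteq> fvs.span (insert x B)"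
    using B(3) fvs.span_mono[of B "insert x B"] fvs.span_base by blast
  moreover have "insert x B \<subseteq> insert x S" using B(1) by blast
  ultimately have "fvs.dim (insert x S) = card (insert x B)"
    by (metis fvs.basis_card_eq_dim)
  then show ?thesis using finB \<open>x \<notin> B\<close> B(4) by simp
qed

section \<open>Rows of a state\<close>

definition row :: "state \<Rightarrow> nat \<Rightarrow> state" where
  "row T a = (\<lambda>t. T (idx_cons a t))"

lemma row_tspace: "T \<in> tspace (d # e) \<Longrightarrow> row T a \<in> tspace e"
  by (auto simp: tspace_def row_def)

lemma apply_local_Cons:
  "apply_local (d#e) L T (idx_cons a t) = (if a < d \<and> t \<in> idx e then
      (\<Sum>a'<d. L 0 a a' * apply_local e (\<lambda>j. L (Suc j)) (row T a') t) else 0)"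
proof (cases "a < d \<and> t \<in> idx e")
  case True
  have "apply_local (d#e) L T (idx_cons a t)
     = (\<Sum>i'\<in>idx (d#e). (\<Prod>j<length (d#e). L j (idx_cons a t j) (i' j)) * T i')"
    using True by (simp add: apply_local_in)
  also have "\<dots> = (\<Sum>p\<in>{..<d} \<times> idx e. (\<lambda>i'. (\<Prod>j<length (d#e). L j (idx_cons a t j) (i' j)) * T i')
        ((\<lambda>(a,t). idx_cons a t) p))"
    unfolding idx_Cons by (rule sum.reindex[OF inj_idx_cons, unfolded comp_def])
  also have "\<dots> = (\<Sum>a'<d. \<Sum>t'\<in>idx e. L 0 a a' *
      ((\<Prod>j<length e. L (Suc j) (t j) (t' j)) * T (idx_cons a' t')))"
    by (simp add: sum.cartesian_product case_prod_beta prod.lessThan_Suc_shift mult.assoc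
        del: prod.lessThan_Suc)
  also have "\<dots> = (\<Sum>a'<d. L 0 a a' * apply_local e (\<lambda>j. L (Suc j)) (row T a') t)"
    using True by (simp add: apply_local_in row_def sum_distrib_left)
  finally show ?thesis using True by simp
qed (auto simp: apply_local_out)

lemma row_apply_local:
  "a < d \<Longrightarrow> row (apply_local (d#e) L T) a
     = (\<Sum>a'<d. cscale (L 0 a a') (apply_local e (\<lambda>j. L (Suc j)) (row T a')))"
  by (auto simp: fun_eq_iff row_def apply_local_Cons sum_fun_apply apply_local_out)

lemma tensor_eq_rows:
  assumes "T \<in> tspace (d#e)" "T' \<in> tspace (d#e)" "\<And>a. a < d \<Longrightarrow> row T a = row T' a"
  shows "T = T'"
proof (rule ext)
  fix i show "T i = T' i"
  proof (cases "i \<in> idx (d#e)")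
    case True
    then have "i 0 < d" by (simp add: idx_Cons_iff)
    from assms(3)[OF this] have "T (idx_cons (i 0) (\<lambda>m. i (Suc m))) = T' (idx_cons (i 0) (\<lambda>m. i (Suc m)))"
      by (simp add: row_def fun_eq_iff)
    then show ?thesis by (simp add: idx_cons_decomp)
  qed (use assms in \<open>simp add: tspace_out\<close>)
qed

definition of_rows :: "nat \<Rightarrow> nat list \<Rightarrow> (nat \<Rightarrow> state) \<Rightarrow> state" where
  "of_rows d e r = (\<lambda>i. if i \<in> idx (d#e) then r (i 0) (\<lambda>m. i (Suc m)) else 0)"

lemma of_rows_tspace [simp]: "of_rows d e r \<in> tspace (d#e)"
  by (simp add: of_rows_def tspace_def)

lemma row_of_rows: "a < d \<Longrightarrow> r a \<in> tspace e \<Longrightarrow> row (of_rows d e r) a = r a"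
  by (auto simp: of_rows_def row_def fun_eq_iff tspace_out)

lemma slocc_le_rows_iff:
  "slocc_le (d#e) psi phi \<longleftrightarrow> psi \<in> tspace (d#e) \<and> (\<exists>L0 L'. \<forall>a<d.
      row psi a = (\<Sum>a'<d. cscale (L0 a a') (apply_local e L' (row phi a'))))"
proof
  assume "slocc_le (d#e) psi phi"
  then obtain L where "psi = apply_local (d#e) L phi" by (auto simp: slocc_le_def)
  then show "psi \<in> tspace (d#e) \<and> (\<exists>L0 L'. \<forall>a<d.
      row psi a = (\<Sum>a'<d. cscale (L0 a a') (apply_local e L' (row phi a'))))"
    by (auto simp: row_apply_local intro!: exI[of _ "L 0"] exI[of _ "\<lambda>j. L (Suc j)"])
next
  assume "psi \<in> tspace (d#e) \<and> (\<exists>L0 L'. \<forall>a<d.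
      row psi a = (\<Sum>a'<d. cscale (L0 a a') (apply_local e L' (row phi a'))))"
  then obtain L0 L' where psiT: "psi \<in> tspace (d#e)"
    and rows: "\<And>a. a < d \<Longrightarrow> row psi a = (\<Sum>a'<d. cscale (L0 a a') (apply_local e L' (row phi a')))"
    by blast
  define L where "L j = (case j of 0 \<Rightarrow> L0 | Suc j' \<Rightarrow> L' j')" for j
  have "apply_local (d#e) L phi = psi"
    by (rule tensor_eq_rows[of _ d e]) (auto simp: psiT row_apply_local rows L_def)
  then show "slocc_le (d#e) psi phi" by (auto simp: slocc_le_def)
qed

lemma rows_in_span_slocc_le:
  assumes "phi \<in> tspace (d#e)"
    and "\<And>a. a < d \<Longrightarrow> row phi a \<in> fvs.span ((\<lambda>a. apply_local e H (row psi a)) ` {..<d})"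
  shows "slocc_le (d#e) phi psi"
proof -
  have "\<forall>a. \<exists>c. a < d \<longrightarrow> row phi a = (\<Sum>a'<d. cscale (c a') (apply_local e H (row psi a')))"
    using assms(2) span_fam_explicit by blast
  then obtain C where "\<And>a. a < d \<Longrightarrow> row phi a = (\<Sum>a'<d. cscale (C a a') (apply_local e H (row psi a')))"
    by metis
  then show ?thesis using assms(1) unfolding slocc_le_rows_iff by blast
qed

lemma row_span_slocc_le:
  assumes phiT: "phi \<in> tspace (d#e)" and psiT: "psi \<in> tspace (d#e)"
    and span: "row phi ` {..<d} \<subseteq> fvs.span (row psi ` {..<d})"
  shows "slocc_le (d#e) phi psi"
proof (rule rows_in_span_slocc_le[where H=local_id, OF phiT])
  have "(\<lambda>a. apply_local e local_id (row psi a)) ` {..<d} = row psi ` {..<d}"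
    using row_tspace[OF psiT] by (intro image_cong) (simp_all add: apply_local_id)
  then show "row phi a \<in> fvs.span ((\<lambda>a. apply_local e local_id (row psi a)) ` {..<d})"
    if "a < d" for a
    using span that by auto
qed

lemma row_rank_mono:
  assumes "slocc_le (d#e) psi phi"
  shows "fvs.dim (row psi ` {..<d}) \<le> fvs.dim (row phi ` {..<d})"
proof -
  obtain L0 L' where rows:
    "\<And>a. a < d \<Longrightarrow> row psi a = (\<Sum>a'<d. cscale (L0 a a') (apply_local e L' (row phi a')))"
    using assms unfolding slocc_le_rows_iff by blast
  have "row psi a \<in> fvs.span (apply_local e L' ` row phi ` {..<d})" if "a < d" for a
    unfolding rows[OF that] by (rule span_fam) (auto intro: fvs.span_base)
  then have "row psi ` {..<d} \<subseteq> fvs.span (apply_local e L' ` row phi ` {..<d})" by blast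
  then have "fvs.dim (row psi ` {..<d}) \<le> fvs.dim (apply_local e L' ` row phi ` {..<d})"
    by (rule dim_mono_finite) simp
  also have "\<dots> \<le> fvs.dim (row phi ` {..<d})"
    by (rule dim_hom_image_le[OF apply_local_hom]) simp
  finally show ?thesis .
qed

section \<open>Maximal states have independent rows\<close>

text \<open>If the rows of \<open>\<phi>\<close> were dependent, replace a redundant row by a basis vector outside
  the span of the others: the new state \<open>\<psi>\<close> satisfies \<open>\<phi> \<le> \<psi>\<close> but has larger row rank,
  so \<open>\<psi> \<le> \<phi>\<close> fails and \<open>\<phi>\<close> is not maximal.\<close>

lemma maximal_rows_indep:
  assumes mx: "slocc_maximal (d#e) phi" and dle: "d \<le> prod_list e"
  shows "indep_fam d (row phi)"
proof (rule ccontr)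
  assume "\<not> indep_fam d (row phi)"
  then obtain a0 where a0: "a0 < d" and dep: "row phi a0 \<in> fvs.span (row phi ` ({..<d} - {a0}))"
    by (rule dependent_fam_in_span)
  define Z where "Z = row phi ` ({..<d} - {a0})"
  have phiT: "phi \<in> tspace (d#e)" using mx by (simp add: slocc_maximal_def)
  have "card Z \<le> d - 1"
    unfolding Z_def using card_image_le[of "{..<d} - {a0}" "row phi"] a0 by simp
  then have "card Z < prod_list e" using a0 dle by linarith
  then obtain t where t: "t \<in> idx e" "coord_vec t \<notin> fvs.span Z"
    using coord_vec_notin_span[of Z e] by (auto simp: Z_def)
  have rows_phi: "row phi ` {..<d} \<subseteq> fvs.span Z"
    using dep a0 fvs.span_superset[of Z] by (auto simp: Z_def)
  define r where "r a = (if a = a0 then coord_vec t else row phi a)" for a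
  define psi where "psi = of_rows d e r"
  have "row psi ` {..<d} = r ` {..<d}"
    using coord_vec_tspace[OF t(1)] row_tspace[OF phiT]
    by (intro image_cong) (simp_all add: psi_def row_of_rows r_def)
  also have "\<dots> = insert (coord_vec t) Z" using a0 by (auto simp: Z_def r_def)
  finally have rows_psi: "row psi ` {..<d} = insert (coord_vec t) Z" .
  have "row phi ` {..<d} \<subseteq> fvs.span (row psi ` {..<d})"
    unfolding rows_psi using rows_phi fvs.span_mono[of Z "insert (coord_vec t) Z"] by blast
  then have "slocc_le (d#e) phi psi"
    using row_span_slocc_le[OF phiT] by (simp add: psi_def)
  with mx have "slocc_le (d#e) psi phi" by (simp add: slocc_maximal_def psi_def)
  then have "fvs.dim (row psi ` {..<d}) \<le> fvs.dim (row phi ` {..<d})" by (rule row_rank_mono)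
  also have "\<dots> \<le> fvs.dim Z" by (rule dim_mono_finite[OF rows_phi]) (simp add: Z_def)
  finally show False
    using t(2) dim_insert_finite[of Z "coord_vec t"] by (simp add: rows_psi Z_def)
qed

section \<open>Coordinate vectors of \<open>\<complex>\<^sup>n\<close> and matrices\<close>

definition cspace :: "nat \<Rightarrow> (nat \<Rightarrow> complex) set" where
  "cspace n = {v. \<forall>s\<ge>n. v s = 0}"

definition unit_vec :: "nat \<Rightarrow> nat \<Rightarrow> complex" where
  "unit_vec b = (\<lambda>a. if a = b then 1 else 0)"

definition mat_vec :: "nat \<Rightarrow> (nat \<Rightarrow> nat \<Rightarrow> complex) \<Rightarrow> (nat \<Rightarrow> complex) \<Rightarrow> (nat \<Rightarrow> complex)" where
  "mat_vec n A v = (\<lambda>a. if a < n then (\<Sum>s<n. A a s * v s) else 0)"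

definition left_invertible :: "nat \<Rightarrow> (nat \<Rightarrow> nat \<Rightarrow> complex) \<Rightarrow> bool" where
  "left_invertible n M \<longleftrightarrow>
     (\<exists>Minv. \<forall>a<n. \<forall>b<n. (\<Sum>s<n. Minv a s * M s b) = (if a = b then 1 else 0))"

lemma subspace_cspace: "fvs.subspace (cspace n)"
  by (auto simp: fvs.subspace_def cspace_def)

lemma mat_vec_cspace: "mat_vec n A v \<in> cspace n"
  by (simp add: mat_vec_def cspace_def)

lemma unit_vec_cspace: "b < n \<Longrightarrow> unit_vec b \<in> cspace n"
  by (simp add: unit_vec_def cspace_def)

lemma inj_unit_vec: "inj unit_vec"
  by (auto simp: inj_on_def unit_vec_def fun_eq_iff)

lemma cspace_expand: assumes "v \<in> cspace n" shows "v = (\<Sum>b<n. cscale (v b) (unit_vec b))"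
proof (rule ext)
  fix s
  have "(\<Sum>b<n. cscale (v b) (unit_vec b)) s = (\<Sum>b<n. if b = s then v b else 0)"
    unfolding sum_fun_apply by (rule sum.cong) (auto simp: unit_vec_def)
  also have "\<dots> = v s" using assms by (auto simp: sum.delta cspace_def)
  finally show "v s = (\<Sum>b<n. cscale (v b) (unit_vec b)) s" by simp
qed

lemma cspace_span: "cspace n \<subseteq> fvs.span (unit_vec ` {..<n})"
proof
  fix v assume v: "v \<in> cspace n"
  show "v \<in> fvs.span (unit_vec ` {..<n})"
    by (subst cspace_expand[OF v], rule fvs.span_sum, rule fvs.span_scale, rule fvs.span_base) auto
qed

lemma indep_unit_vec: "fvs.independent (unit_vec ` {..<n})"
proof -
  have "u v = 0" if "v \<in> unit_vec ` {..<n}" "(\<Sum>v\<in>unit_vec ` {..<n}. cscale (u v) v) = 0" for u v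
  proof -
    from that obtain t where t: "t < n" "v = unit_vec t" by auto
    have "(\<Sum>v\<in>unit_vec ` {..<n}. cscale (u v) v) t = (\<Sum>s<n. cscale (u (unit_vec s)) (unit_vec s) t)"
      by (simp add: sum_fun_apply sum.reindex[OF inj_on_subset[OF inj_unit_vec]])
    also have "\<dots> = (\<Sum>s<n. if s = t then u (unit_vec s) else 0)"
      by (rule sum.cong) (auto simp: unit_vec_def)
    also have "\<dots> = u (unit_vec t)" using t(1) by (simp add: sum.delta')
    finally show ?thesis using that(2) t by simp
  qed
  then show ?thesis by (auto simp: fvs.dependent_finite)
qed

lemma card_unit_vec: "card (unit_vec ` {..<n}) = n"
  by (simp add: card_image[OF inj_on_subset[OF inj_unit_vec]])

lemma basis_card_cspace:
  assumes "B \<subseteq> cspace n" "fvs.independent B" "cspace n \<subseteq> fvs.span B"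
  shows "finite B \<and> card B = n"
proof -
  have 1: "finite B \<and> card B \<le> n"
    using fvs.independent_span_bound[OF finite_imageI[OF finite_lessThan] assms(2), of unit_vec n]
      assms(1) cspace_span[of n] card_unit_vec[of n] by auto
  have "card (unit_vec ` {..<n}) \<le> card B"
    using fvs.independent_span_bound[OF _ indep_unit_vec] assms(3) unit_vec_cspace 1 by blast
  then show ?thesis using 1 card_unit_vec[of n] by simp
qed

lemma mat_vec_hom: "module_hom cscale cscale (mat_vec n A)"
  unfolding module_hom_iff_linear Vector_Spaces.linear_iff
  by (auto simp: fvs.vector_space_axioms mat_vec_def fun_eq_iff sum_distrib_left distrib_left
     sum.distrib algebra_simps)

lemma inj_from_span:
  assumes hom: "module_hom cscale cscale h" and finX: "finite X"
    and sp: "fvs.span X \<subseteq> fvs.span (h ` X)"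
  shows "inj_on h (fvs.span X)"
proof -
  obtain B where B: "B \<subseteq> X" "fvs.independent B" "X \<subseteq> fvs.span B"
    using fvs.maximal_independent_subset[of X] by blast
  have finB: "finite B" using B(1) finX finite_subset by blast
  have spB: "fvs.span B = fvs.span X"
    using B by (metis fvs.span_minimal fvs.span_mono fvs.subspace_span subset_antisym)
  have "h ` X \<subseteq> h ` fvs.span B" using B(3) by blast
  also have "\<dots> = fvs.span (h ` B)" using module_hom.span_image[OF hom] by simp
  finally have BhB: "B \<subseteq> fvs.span (h ` B)"
    using B(1) sp fvs.span_superset[of X] by (metis fvs.span_minimal fvs.subspace_span subset_trans)
  have c1: "card B \<le> card (h ` B)"
    using fvs.independent_span_bound[OF _ B(2) BhB] finB by auto
  have injB: "inj_on h B"
    by (rule eq_card_imp_inj_on[OF finB]) (use c1 card_image_le[OF finB, of h] in linarith)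
  have indhB: "fvs.independent (h ` B)"
  proof (rule ccontr)
    assume "\<not> fvs.independent (h ` B)"
    then obtain x where x: "x \<in> h ` B" "x \<in> fvs.span (h ` B - {x})"
      by (auto simp: fvs.dependent_def)
    have "fvs.span (h ` B - {x}) = fvs.span (h ` B)"
      using x by (metis fvs.span_redundant insert_Diff)
    then have "B \<subseteq> fvs.span (h ` B - {x})" using BhB by simp
    then have "card B \<le> card (h ` B - {x})"
      using fvs.independent_span_bound[OF _ B(2)] finB by auto
    also have "\<dots> = card (h ` B) - 1" using x(1) finB by simp
    also have "\<dots> \<le> card B - 1" using card_image_le[OF finB, of h] by simp
    finally show False using x(1) finB
      by (metis One_nat_def card_gt_0_iff diff_less empty_iff finite_imageI image_is_empty not_le zero_less_one)
  qed
  have "inj_on h (fvs.span B)"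
    by (rule module_hom.inj_on_span_independent_image[OF hom indhB injB])
  then show ?thesis using spB by simp
qed

lemma inj_on_glue:
  assumes "inj_on f B" "bij_betw h (B' - B) (C' - f ` B)"
  shows "inj_on (\<lambda>v. if v \<in> B then f v else h v) B'"
proof (rule inj_onI)
  fix x y assume xy: "x \<in> B'" "y \<in> B'" and e: "(if x \<in> B then f x else h x) = (if y \<in> B then f y else h y)"
  have hC: "h z \<in> C' - f ` B" if "z \<in> B'" "z \<notin> B" for z
    using assms(2) that by (auto simp: bij_betw_def)
  show "x = y"
  proof (cases "x \<in> B"; cases "y \<in> B")
    assume "x \<in> B" "y \<in> B" then show ?thesis using e assms(1) by (simp add: inj_on_def)
  next
    assume "x \<in> B" "y \<notin> B" then show ?thesis using e hC[OF xy(2)] imageI[of x B f] by simp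
  next
    assume "x \<notin> B" "y \<in> B" then show ?thesis using e hC[OF xy(1)] imageI[of y B f] by simp
  next
    assume "x \<notin> B" "y \<notin> B" then show ?thesis using e assms(2) xy by (auto simp: bij_betw_def inj_on_def)
  qed
qed

text \<open>A map sending an independent set \<open>B \<subseteq> \<complex>\<^sup>n\<close> injectively onto an independent set in
  \<open>\<complex>\<^sup>n\<close> extends to a linear map of \<open>\<complex>\<^sup>n\<close> into itself that is injective: extend \<open>B\<close> and
  its image to bases \<open>B'\<close>, \<open>C'\<close> of \<open>\<complex>\<^sup>n\<close> and match the added vectors bijectively.\<close>

lemma extend_injective_on_basis:
  assumes B: "finite B" "B \<subseteq> cspace n" "fvs.independent B"
    and fB: "f ` B \<subseteq> cspace n" "fvs.independent (f ` B)" "inj_on f B"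
  shows "\<exists>g. module_hom cscale cscale g \<and> (\<forall>b\<in>B. g b = f b) \<and>
    (\<forall>v\<in>cspace n. g v \<in> cspace n) \<and> inj_on g (cspace n)"
proof -
  obtain B' where B': "B \<subseteq> B'" "B' \<subseteq> cspace n" "fvs.independent B'" "cspace n \<subseteq> fvs.span B'"
    using fvs.maximal_independent_subset_extend[OF B(2,3)] by blast
  obtain C' where C': "f ` B \<subseteq> C'" "C' \<subseteq> cspace n" "fvs.independent C'" "cspace n \<subseteq> fvs.span C'"
    using fvs.maximal_independent_subset_extend[OF fB(1,2)] by blast
  from basis_card_cspace[OF B'(2-4)] have finB': "finite B'" and cB': "card B' = n" by auto
  from basis_card_cspace[OF C'(2-4)] have finC': "finite C'" and cC': "card C' = n" by auto
  have "card (B' - B) = card (C' - f ` B)"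
    using card_Diff_subset[OF B(1) B'(1)] card_Diff_subset[OF finite_imageI[OF B(1)] C'(1)] cB' cC'
      card_image[OF fB(3)] by simp
  then obtain h where h: "bij_betw h (B' - B) (C' - f ` B)"
    using finite_same_card_bij[of "B' - B" "C' - f ` B"] finB' finC' by blast
  define g0 where "g0 v = (if v \<in> B then f v else h v)" for v
  obtain g where glin: "Vector_Spaces.linear cscale cscale g" and gB': "\<And>x. x \<in> B' \<Longrightarrow> g x = g0 x"
    using fvsp.linear_independent_extend[OF B'(3), of g0] by blast
  have ghom: "module_hom cscale cscale g" using glin by (simp add: module_hom_iff_linear)
  have "g ` B' = g0 ` B'" using gB' by (auto simp: image_def)
  also have "\<dots> = f ` B \<union> h ` (B' - B)" using B'(1) by (auto simp: g0_def image_def)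
  also have "\<dots> = C'" using h C'(1) by (auto simp: bij_betw_def)
  finally have gimg: "g ` B' = C'" .
  have "inj_on g0 B'" unfolding g0_def by (rule inj_on_glue[OF fB(3) h])
  then have "inj_on g B'" using inj_on_cong[of B' g g0] gB' by simp
  then have "inj_on g (fvs.span B')"
    using module_hom.inj_on_span_independent_image[OF ghom] gimg C'(3) by simp
  then have "inj_on g (cspace n)" using B'(4) inj_on_subset by blast
  moreover have "g v \<in> cspace n" if "v \<in> cspace n" for v
  proof -
    have "g v \<in> g ` fvs.span B'" using that B'(4) by blast
    also have "\<dots> = fvs.span C'" using module_hom.span_image[OF ghom, of B'] gimg by simp
    also have "\<dots> \<subseteq> cspace n" by (rule fvs.span_minimal[OF C'(2) subspace_cspace])
    finally show ?thesis .
  qed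
  moreover have "\<forall>b\<in>B. g b = f b" using gB' B'(1) by (auto simp: g0_def)
  ultimately show ?thesis using ghom by blast
qed

lemma extend_injective_hom:
  assumes fhom: "module_hom cscale cscale f" and finX: "finite X" and XS: "X \<subseteq> cspace n"
    and fS: "\<And>v. f v \<in> cspace n" and inj: "inj_on f (fvs.span X)"
  shows "\<exists>g. module_hom cscale cscale g \<and> (\<forall>u\<in>fvs.span X. g u = f u) \<and>
    (\<forall>v\<in>cspace n. g v \<in> cspace n) \<and> inj_on g (cspace n)"
proof -
  obtain B where B: "B \<subseteq> X" "fvs.independent B" "X \<subseteq> fvs.span B"
    using fvs.maximal_independent_subset[of X] by blast
  have spB: "fvs.span B = fvs.span X"
    using B by (metis fvs.span_minimal fvs.span_mono fvs.subspace_span subset_antisym)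
  have injfB: "inj_on f B" using inj spB fvs.span_superset inj_on_subset by metis
  have "fvs.independent (f ` B)"
    using module_hom.independent_injective_image[OF fhom B(2)] inj spB by simp
  then obtain g where ghom: "module_hom cscale cscale g" and gB: "\<forall>b\<in>B. g b = f b"
    and gS: "\<forall>v\<in>cspace n. g v \<in> cspace n" and ginj: "inj_on g (cspace n)"
    using extend_injective_on_basis[of B n f] finite_subset[OF B(1) finX] B(1,2) XS fS injfB by blast
  have glin: "Vector_Spaces.linear cscale cscale g" and flin: "Vector_Spaces.linear cscale cscale f"
    using ghom fhom by (simp_all add: module_hom_iff_linear)
  have "g u = f u" if "u \<in> fvs.span X" for u
  proof (rule fvsp.linear_eq_on[OF glin flin])
    show "u \<in> fvs.span B" using that spB by simp
  qed (use gB in simp)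
  then show ?thesis using ghom gS ginj by blast
qed

definition matrix_of :: "((nat \<Rightarrow> complex) \<Rightarrow> (nat \<Rightarrow> complex)) \<Rightarrow> nat \<Rightarrow> nat \<Rightarrow> complex" where
  "matrix_of g a b = g (unit_vec b) a"

lemma hom_cspace_expand:
  assumes ghom: "module_hom cscale cscale g" and v: "v \<in> cspace n"
  shows "g v = (\<Sum>b<n. cscale (v b) (g (unit_vec b)))"
  by (subst cspace_expand[OF v]) (simp add: module_hom.sum[OF ghom] module_hom.scale[OF ghom])

lemma mat_vec_matrix_of:
  assumes ghom: "module_hom cscale cscale g" and gS: "\<And>v. v \<in> cspace n \<Longrightarrow> g v \<in> cspace n"
    and v: "v \<in> cspace n"
  shows "mat_vec n (matrix_of g) v = g v"
proof (rule ext)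
  fix a
  have "g v a = (\<Sum>b<n. v b * matrix_of g a b)"
    by (simp add: hom_cspace_expand[OF ghom v] sum_fun_apply matrix_of_def)
  moreover have "g v a = 0" if "\<not> a < n" using gS[OF v] that by (auto simp: cspace_def)
  ultimately show "mat_vec n (matrix_of g) v a = g v a" by (auto simp: mat_vec_def mult.commute)
qed

lemma left_invertible_matrix_of:
  assumes ghom: "module_hom cscale cscale g" and gS: "\<And>v. v \<in> cspace n \<Longrightarrow> g v \<in> cspace n"
    and ginj: "inj_on g (cspace n)"
  shows "left_invertible n (matrix_of g)"
proof -
  obtain k where klin: "Vector_Spaces.linear cscale cscale k" and kg: "\<And>v. v \<in> cspace n \<Longrightarrow> k (g v) = v"
    using fvsp.linear_exists_left_inverse_on[OF _ subspace_cspace ginj] ghom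
    by (auto simp: module_hom_iff_linear)
  have khom: "module_hom cscale cscale k" using klin by (simp add: module_hom_iff_linear)
  have "(\<Sum>s<n. matrix_of k a s * matrix_of g s b) = (if a = b then 1 else 0)" if "b < n" for a b
  proof -
    have "(\<Sum>s<n. matrix_of k a s * matrix_of g s b) = k (g (unit_vec b)) a"
      by (simp add: hom_cspace_expand[OF khom gS[OF unit_vec_cspace[OF that]]] sum_fun_apply
          matrix_of_def mult.commute)
    also have "\<dots> = (if a = b then 1 else 0)" using kg unit_vec_cspace[OF that] by (simp add: unit_vec_def)
    finally show ?thesis .
  qed
  then show ?thesis unfolding left_invertible_def by blast
qed

lemma left_invertible_extension:
  assumes "finite X" "X \<subseteq> cspace n" "inj_on (mat_vec n A) (fvs.span X)"
  shows "\<exists>M. (\<forall>u\<in>fvs.span X. mat_vec n M u = mat_vec n A u) \<and> left_invertible n M"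
proof -
  obtain g where ghom: "module_hom cscale cscale g" and gA: "\<forall>u\<in>fvs.span X. g u = mat_vec n A u"
    and gS: "\<forall>v\<in>cspace n. g v \<in> cspace n" and ginj: "inj_on g (cspace n)"
    using extend_injective_hom[OF mat_vec_hom assms(1,2) mat_vec_cspace assms(3)] by blast
  have "mat_vec n (matrix_of g) u = mat_vec n A u" if "u \<in> fvs.span X" for u
    using mat_vec_matrix_of[OF ghom _ fvs.span_minimal[OF assms(2) subspace_cspace, THEN subsetD, OF that]]
      gS gA that by simp
  then show ?thesis using left_invertible_matrix_of[OF ghom _ ginj] gS by blast
qed

section \<open>SLOCC equivalence by invertible local operators\<close>

definition fiber_base :: "nat list \<Rightarrow> nat \<Rightarrow> (nat \<Rightarrow> nat) set" where
  "fiber_base e j = {i \<in> idx e. i j = 0}"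

definition fiber :: "nat list \<Rightarrow> nat \<Rightarrow> state \<Rightarrow> (nat \<Rightarrow> nat) \<Rightarrow> (nat \<Rightarrow> complex)" where
  "fiber e j T i = (\<lambda>s. if s < e!j then T (i(j:=s)) else 0)"

definition fiber_coeff :: "nat list \<Rightarrow> nat \<Rightarrow> local_ops \<Rightarrow> (nat \<Rightarrow> nat) \<Rightarrow> (nat \<Rightarrow> nat) \<Rightarrow> complex" where
  "fiber_coeff e j L i i' = (\<Prod>l\<in>{..<length e} - {j}. L l (i l) (i' l))"

lemma finite_fiber_base [simp]: "finite (fiber_base e j)"
  by (simp add: fiber_base_def)

lemma fiber_base_idx: "fiber_base e j \<subseteq> idx e"
  by (auto simp: fiber_base_def)

lemma fiber_cspace: "fiber e j T i \<in> cspace (e!j)"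
  by (simp add: fiber_def cspace_def)

lemma idx_upd: "j < length e \<Longrightarrow> i \<in> idx e \<Longrightarrow> s < e!j \<Longrightarrow> i(j:=s) \<in> idx e"
  by (auto simp: idx_def)

lemma idx_split:
  assumes "j < length e"
  shows "idx e = (\<lambda>(i', s). i'(j:=s)) ` (fiber_base e j \<times> {..<e!j})"
proof (rule set_eqI, rule iffI)
  fix i assume i: "i \<in> idx e"
  then have "i j < e!j" using assms by (auto simp: idx_def)
  then have "(i(j:=0), i j) \<in> fiber_base e j \<times> {..<e!j}"
    using idx_upd[OF assms i] by (auto simp: fiber_base_def)
  moreover have "i = (i(j:=0))(j := i j)" by simp
  ultimately show "i \<in> (\<lambda>(i', s). i'(j:=s)) ` (fiber_base e j \<times> {..<e!j})"
    by (metis (no_types, lifting) case_prod_conv image_eqI)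
next
  fix i assume "i \<in> (\<lambda>(i', s). i'(j:=s)) ` (fiber_base e j \<times> {..<e!j})"
  then show "i \<in> idx e" using idx_upd[OF assms] by (auto simp: fiber_base_def)
qed

lemma inj_split: "inj_on (\<lambda>(i', s). i'(j:=s)) (fiber_base e j \<times> A)"
proof (rule inj_onI, clarsimp)
  fix i' s i'' s' assume a: "i' \<in> fiber_base e j" and b: "i'' \<in> fiber_base e j"
    and c: "i'(j := s) = i''(j := s')"
  have "i' = i''"
  proof (rule ext)
    fix x show "i' x = i'' x" using fun_cong[OF c, of x] a b by (cases "x = j") (auto simp: fiber_base_def)
  qed
  then show "i' = i'' \<and> s = s'" using fun_cong[OF c, of j] by simp
qed

lemma apply_local_fibers:
  assumes j: "j < length e" and i: "i \<in> idx e"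
  shows "apply_local e L T i
    = (\<Sum>i'\<in>fiber_base e j. fiber_coeff e j L i i' * mat_vec (e!j) (L j) (fiber e j T i') (i j))"
proof -
  have ij: "i j < e!j" using i j by (auto simp: idx_def)
  have split: "(\<Prod>l<length e. L l (i l) ((i'(j:=s)) l)) = L j (i j) s * fiber_coeff e j L i i'" for i' s
  proof -
    have "(\<Prod>l\<in>{..<length e} - {j}. L l (i l) ((i'(j:=s)) l)) = fiber_coeff e j L i i'"
      unfolding fiber_coeff_def by (rule prod.cong) auto
    then show ?thesis using j by (subst prod.remove[of _ j]) auto
  qed
  have "apply_local e L T i = (\<Sum>i''\<in>idx e. (\<Prod>l<length e. L l (i l) (i'' l)) * T i'')"
    using i by (simp add: apply_local_in)
  also have "\<dots> = (\<Sum>p\<in>fiber_base e j \<times> {..<e!j}.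
      (\<lambda>i''. (\<Prod>l<length e. L l (i l) (i'' l)) * T i'') ((\<lambda>(i', s). i'(j:=s)) p))"
    unfolding idx_split[OF j] by (rule sum.reindex[OF inj_split, unfolded comp_def])
  also have "\<dots> = (\<Sum>i'\<in>fiber_base e j. \<Sum>s<e!j. (\<Prod>l<length e. L l (i l) ((i'(j:=s)) l)) * T (i'(j:=s)))"
    by (simp add: sum.cartesian_product case_prod_beta)
  also have "\<dots> = (\<Sum>i'\<in>fiber_base e j. \<Sum>s<e!j. fiber_coeff e j L i i' * (L j (i j) s * T (i'(j:=s))))"
    by (simp only: split mult.assoc mult.left_commute[of "L j (i j) _"])
  also have "\<dots> = (\<Sum>i'\<in>fiber_base e j. fiber_coeff e j L i i' * mat_vec (e!j) (L j) (fiber e j T i') (i j))"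
    using ij by (simp add: mat_vec_def fiber_def sum_distrib_left)
  finally show ?thesis .
qed

lemma fiber_apply_local:
  assumes j: "j < length e" and i: "i \<in> idx e"
  shows "fiber e j (apply_local e L T) i
    = (\<Sum>i'\<in>fiber_base e j. cscale (fiber_coeff e j L i i') (mat_vec (e!j) (L j) (fiber e j T i')))"
proof (rule ext)
  fix s
  have coeff_upd: "fiber_coeff e j L (i(j:=s)) i' = fiber_coeff e j L i i'" for i'
    unfolding fiber_coeff_def by (rule prod.cong) auto
  show "fiber e j (apply_local e L T) i s
    = (\<Sum>i'\<in>fiber_base e j. cscale (fiber_coeff e j L i i') (mat_vec (e!j) (L j) (fiber e j T i'))) s"
    using apply_local_fibers[OF j idx_upd[OF j i]]
    by (cases "s < e!j") (simp_all add: fiber_def sum_fun_apply mat_vec_def coeff_upd)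
qed

lemma fibers_apply_local_span:
  assumes j: "j < length e"
  shows "fiber e j (apply_local e L T) ` fiber_base e j
    \<subseteq> fvs.span (mat_vec (e!j) (L j) ` fiber e j T ` fiber_base e j)"
proof
  fix v assume "v \<in> fiber e j (apply_local e L T) ` fiber_base e j"
  then obtain i where i: "i \<in> fiber_base e j" "v = fiber e j (apply_local e L T) i" by blast
  have "v = (\<Sum>i'\<in>fiber_base e j. cscale (fiber_coeff e j L i i') (mat_vec (e!j) (L j) (fiber e j T i')))"
    using i fiber_apply_local[OF j] fiber_base_idx by blast
  also have "\<dots> \<in> fvs.span (mat_vec (e!j) (L j) ` fiber e j T ` fiber_base e j)"
    by (intro fvs.span_sum fvs.span_scale fvs.span_base) auto
  finally show "v \<in> fvs.span (mat_vec (e!j) (L j) ` fiber e j T ` fiber_base e j)" .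
qed

lemma apply_local_replace:
  assumes j: "j < length e"
    and eq: "\<And>i'. i' \<in> fiber_base e j \<Longrightarrow> mat_vec (e!j) M (fiber e j T i') = mat_vec (e!j) (L j) (fiber e j T i')"
  shows "apply_local e (L(j:=M)) T = apply_local e L T"
proof (rule ext)
  fix i show "apply_local e (L(j:=M)) T i = apply_local e L T i"
  proof (cases "i \<in> idx e")
    case True
    have "fiber_coeff e j (L(j:=M)) i i' = fiber_coeff e j L i i'" for i'
      unfolding fiber_coeff_def by (rule prod.cong) auto
    then show ?thesis unfolding apply_local_fibers[OF j True] by (auto intro!: sum.cong simp: eq)
  qed (simp add: apply_local_out)
qed

text \<open>If \<open>T' = L T\<close> and \<open>T = L' T'\<close>, the \<open>j\<close>-th matrix of \<open>L\<close> can be replaced by a left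
  invertible one: \<open>L' j \<circ> L j\<close> maps the fibers of \<open>T\<close> onto a spanning set of their span,
  so \<open>L j\<close> is injective on that span.\<close>

lemma invertible_party:
  assumes j: "j < length e" and T': "T' = apply_local e L T" and T: "T = apply_local e L' T'"
  shows "\<exists>M. left_invertible (e!j) M \<and> apply_local e (L(j:=M)) T = T'"
proof -
  define n where "n = e!j"
  define X where "X = fiber e j T ` fiber_base e j"
  define f where "f = mat_vec n (L j)"
  define g where "g = mat_vec n (L' j)"
  have ghom: "module_hom cscale cscale g" unfolding g_def by (rule mat_vec_hom)
  have "Vector_Spaces.linear cscale cscale f" "Vector_Spaces.linear cscale cscale g"
    using mat_vec_hom by (simp_all add: f_def g_def module_hom_iff_linear)
  then have gfhom: "module_hom cscale cscale (g \<circ> f)"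
    using Vector_Spaces.linear_compose by (simp add: module_hom_iff_linear)
  have Y: "fiber e j T' ` fiber_base e j \<subseteq> fvs.span (f ` X)"
    unfolding X_def f_def n_def T' by (rule fibers_apply_local_span[OF j])
  have "X \<subseteq> fvs.span (g ` fiber e j T' ` fiber_base e j)"
    unfolding X_def g_def n_def by (subst (1) T) (rule fibers_apply_local_span[OF j])
  also have "\<dots> \<subseteq> fvs.span (g ` fvs.span (f ` X))"
    using Y by (intro fvs.span_mono image_mono)
  also have "\<dots> = fvs.span ((g \<circ> f) ` X)"
    using module_hom.span_image[OF ghom, of "f ` X", symmetric] by (simp add: fvs.span_span image_comp)
  finally have "fvs.span X \<subseteq> fvs.span ((g \<circ> f) ` X)"
    by (metis fvs.span_minimal fvs.subspace_span)
  then have "inj_on (g \<circ> f) (fvs.span X)" using inj_from_span[OF gfhom] by (simp add: X_def)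
  then have "inj_on (mat_vec n (L j)) (fvs.span X)" unfolding f_def by (rule inj_on_imageI2)
  moreover have "X \<subseteq> cspace n" by (auto simp: X_def n_def fiber_cspace)
  ultimately obtain M where M1: "\<forall>u\<in>fvs.span X. mat_vec n M u = mat_vec n (L j) u"
    and M2: "left_invertible n M"
    using left_invertible_extension[of X n "L j"] by (auto simp: X_def)
  have "apply_local e (L(j:=M)) T = apply_local e L T"
  proof (rule apply_local_replace[OF j])
    fix i' assume "i' \<in> fiber_base e j"
    then have "fiber e j T i' \<in> fvs.span X" by (auto simp: X_def intro: fvs.span_base)
    then show "mat_vec (e!j) M (fiber e j T i') = mat_vec (e!j) (L j) (fiber e j T i')"
      using M1 by (simp add: n_def)
  qed
  then show ?thesis using M2 T' unfolding n_def by blast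
qed

text \<open>SLOCC equivalent states are related by local operators that are all invertible
  (replace the parties one at a time).\<close>

lemma slocc_equiv_invertible_ops:
  assumes T': "T' = apply_local e L T" and T: "T = apply_local e L' T'"
  shows "\<exists>Lx. apply_local e Lx T = T' \<and> (\<forall>j<length e. left_invertible (e!j) (Lx j))"
proof -
  have "\<exists>Lx. apply_local e Lx T = T' \<and> (\<forall>j<min m (length e). left_invertible (e!j) (Lx j))" for m
  proof (induction m)
    case 0 then show ?case using T' by auto
  next
    case (Suc m)
    then obtain Lx where L1: "apply_local e Lx T = T'"
      and L2: "\<forall>j<min m (length e). left_invertible (e!j) (Lx j)" by blast
    show ?case
    proof (cases "m < length e")
      case True
      from invertible_party[OF True L1[symmetric] T] obtain M where
        M: "left_invertible (e!m) M" and Mq: "apply_local e (Lx(m:=M)) T = T'" by blast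
      have "\<forall>j<min (Suc m) (length e). left_invertible (e!j) ((Lx(m:=M)) j)"
        using L2 M by (auto simp: less_Suc_eq)
      then show ?thesis using Mq by blast
    next
      case False
      then have "min (Suc m) (length e) = min m (length e)" by simp
      then show ?thesis using L1 L2 by metis
    qed
  qed
  from this[of "length e"] show ?thesis by simp
qed

section \<open>Adjoints of invertible local operators\<close>

text \<open>If every matrix of \<open>G\<close> is left invertible, the transposed inverses form a local
  operator \<open>H\<close> adjoint to \<open>G\<close>: \<open>\<langle>H v, G w\<rangle> = \<langle>v, w\<rangle>\<close>.\<close>

lemma local_adjoint:
  assumes "\<And>j. j < length e \<Longrightarrow> left_invertible (e!j) (G j)"
  obtains H where "\<And>v w. w \<in> tspace e \<Longrightarrow>
    pairing e (apply_local e H v) (apply_local e G w) = pairing e v w"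
proof -
  have "\<forall>j. \<exists>Minv. j < length e \<longrightarrow> (\<forall>a<e!j. \<forall>b<e!j.
       (\<Sum>s<e!j. Minv a s * G j s b) = (if a = b then 1 else 0))"
    using assms by (auto simp: left_invertible_def)
  then obtain Mi where Mi: "\<And>j a b. j < length e \<Longrightarrow> a < e!j \<Longrightarrow> b < e!j \<Longrightarrow>
       (\<Sum>s<e!j. Mi j a s * G j s b) = (if a = b then 1 else 0)"
    by metis
  define H where "H j a b = Mi j b a" for j a b
  have "apply_local e (local_tcomp e H G) = apply_local e local_id"
    by (rule ext, rule apply_local_cong) (simp add: local_tcomp_def H_def Mi local_id_def)
  then show ?thesis
    by (intro that[of H]) (simp add: pairing_apply_local apply_local_id)
qed

lemma adjoint_indep_fam:
  assumes adj: "\<And>v w. w \<in> tspace e \<Longrightarrow>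
      pairing e (apply_local e H v) (apply_local e G w) = pairing e v w"
    and xI: "indep_fam d x" and xT: "\<And>a. a < d \<Longrightarrow> x a \<in> tspace e"
  shows "indep_fam d (\<lambda>a. apply_local e H (x a))"
  unfolding indep_fam_def
proof (rule allI, rule impI)
  fix c assume c: "(\<Sum>a<d. cscale (c a) (apply_local e H (x a))) = 0"
  define v where "v = (\<Sum>a<d. cscale (c a) (x a))"
  have hom: "module_hom cscale cscale (apply_local e H)" by (rule apply_local_hom)
  have Hv: "apply_local e H v = 0"
    using c by (simp add: v_def module_hom.sum[OF hom] module_hom.scale[OF hom])
  have "v = 0"
  proof (rule pairing_nondeg)
    show "v \<in> tspace e" unfolding v_def by (intro tspace_sum tspace_cscale xT) simp
    fix w assume "w \<in> tspace e"
    then have "pairing e v w = 0" using adj[of w v] Hv by simp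
    then show "pairing e w v = 0" by (simp add: pairing_comm)
  qed
  then show "\<forall>a<d. c a = 0" using xI unfolding indep_fam_def v_def by blast
qed

section \<open>Complements of maximal states\<close>

definition complement :: "nat \<Rightarrow> nat \<Rightarrow> nat list \<Rightarrow> state \<Rightarrow> state \<Rightarrow> bool" where
  "complement d k e phi chi \<longleftrightarrow> chi \<in> tspace (k#e) \<and> indep_fam k (row chi) \<and>
     (\<forall>a<d. \<forall>b<k. pairing e (row phi a) (row chi b) = 0)"

lemma complement_exists:
  assumes "slocc_maximal (d#e) phi" "d + k = prod_list e"
  shows "\<exists>chi. complement d k e phi chi"
proof -
  have phiT: "phi \<in> tspace (d#e)" using assms(1) by (simp add: slocc_maximal_def)
  have "indep_fam d (row phi)" using maximal_rows_indep[OF assms(1)] assms(2) by simp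
  moreover have "\<And>a. a < d \<Longrightarrow> row phi a \<in> tspace e" using row_tspace[OF phiT] by blast
  ultimately obtain x where x: "indep_fam k x" "\<forall>b<k. x b \<in> tspace e"
    "\<forall>a<d. \<forall>b<k. pairing e (row phi a) (x b) = 0"
    using annihilator_exists[of d "row phi" e k] assms(2) by blast
  have r: "row (of_rows k e x) b = x b" if "b < k" for b using row_of_rows[OF that] x(2) that by simp
  have "indep_fam k (row (of_rows k e x))"
    using x(1) r unfolding indep_fam_def by (metis (no_types, lifting) lessThan_iff sum.cong)
  then show ?thesis using x r unfolding complement_def by (intro exI[of _ "of_rows k e x"]) auto
qed

lemma slocc_equiv_rows_invertible:
  assumes "(chi1, chi2) \<in> slocc_equiv (k#e)"
  obtains G L0 where "\<And>j. j < length e \<Longrightarrow> left_invertible (e!j) (G j)"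
    "\<And>b. b < k \<Longrightarrow> row chi1 b = (\<Sum>b'<k. cscale (L0 b b') (apply_local e G (row chi2 b')))"
proof -
  from assms have "slocc_le (k#e) chi1 chi2" "slocc_le (k#e) chi2 chi1"
    by (simp_all add: slocc_equiv_def)
  then obtain L L' where "apply_local (k#e) L chi2 = chi1" "apply_local (k#e) L' chi1 = chi2"
    unfolding slocc_le_def by blast
  from slocc_equiv_invertible_ops[OF this[symmetric]] obtain Lx where
    Lx: "apply_local (k#e) Lx chi2 = chi1" and
    inv: "\<forall>j<length (k#e). left_invertible ((k#e)!j) (Lx j)" by blast
  have "left_invertible (e!j) (Lx (Suc j))" if "j < length e" for j
    using inv[rule_format, of "Suc j"] that by simp
  moreover have "row chi1 b = (\<Sum>b'<k. cscale (Lx 0 b b') (apply_local e (\<lambda>j. Lx (Suc j)) (row chi2 b')))"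
    if "b < k" for b
    using row_apply_local[OF that, of e Lx chi2] Lx by simp
  ultimately show ?thesis by (rule that[of "\<lambda>j. Lx (Suc j)" "Lx 0"])
qed

text \<open>The key step: if the complements of \<open>\<phi>\<close> and of \<open>\<psi>\<close> (whose rows are independent)
  are SLOCC equivalent, write the rows of \<open>\<chi>\<^sub>\<phi>\<close> through those of \<open>G \<chi>\<^sub>\<psi>\<close> with \<open>G\<close> invertible,
  and let \<open>H\<close> be adjoint to \<open>G\<close>.  Then the rows \<open>H \<psi>\<^sub>a\<close> are independent and annihilate
  the rows of \<open>\<chi>\<^sub>\<phi>\<close>, so they span all rows of \<open>\<phi>\<close> (annihilator_span); hence \<open>\<phi> \<le> \<psi>\<close>.\<close>

lemma complement_equiv_slocc_le:
  assumes phiT: "phi \<in> tspace (d#e)" and psiT: "psi \<in> tspace (d#e)"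
    and psiI: "indep_fam d (row psi)" and dk: "d + k = prod_list e"
    and c1: "complement d k e phi chi1" and c2: "complement d k e psi chi2"
    and eqv: "(chi1, chi2) \<in> slocc_equiv (k#e)"
  shows "slocc_le (d#e) phi psi"
proof -
  obtain G L0 where G_inv: "\<And>j. j < length e \<Longrightarrow> left_invertible (e!j) (G j)"
    and rows1: "\<And>b. b < k \<Longrightarrow> row chi1 b = (\<Sum>b'<k. cscale (L0 b b') (apply_local e G (row chi2 b')))"
    using slocc_equiv_rows_invertible[OF eqv] by metis
  obtain H where adj: "\<And>v w. w \<in> tspace e \<Longrightarrow>
      pairing e (apply_local e H v) (apply_local e G w) = pairing e v w"
    using local_adjoint[OF G_inv] by blast
  define y where "y a = apply_local e H (row psi a)" for a
  have chi1T: "chi1 \<in> tspace (k#e)" and chi2T: "chi2 \<in> tspace (k#e)"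
    using c1 c2 by (simp_all add: complement_def)
  have yx: "pairing e (y a) (row chi1 b) = 0" if "a < d" "b < k" for a b
  proof -
    have "pairing e (y a) (row chi1 b) = (\<Sum>b'<k. L0 b b' * pairing e (row psi a) (row chi2 b'))"
      by (simp add: rows1[OF that(2)] pairing_sum_r y_def adj row_tspace[OF chi2T])
    also have "\<dots> = 0" using c2 that(1) by (simp add: complement_def)
    finally show ?thesis .
  qed
  have yI: "indep_fam d y"
    unfolding y_def by (rule adjoint_indep_fam[OF adj psiI row_tspace[OF psiT]])
  have "row phi a \<in> fvs.span (y ` {..<d})" if "a < d" for a
  proof (rule annihilator_span[OF _ _ yI _ yx dk])
    show "indep_fam k (row chi1)" using c1 by (simp add: complement_def)
    show "\<And>b. b < k \<Longrightarrow> pairing e (row phi a) (row chi1 b) = 0"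
      using c1 that by (simp add: complement_def)
  qed (auto simp: y_def row_tspace[OF chi1T] row_tspace[OF phiT])
  then show ?thesis unfolding y_def by (rule rows_in_span_slocc_le[OF phiT])
qed

lemma maximal_equiv_of_complement_equiv:
  assumes mphi: "slocc_maximal (d#e) phi" and mpsi: "slocc_maximal (d#e) psi"
    and dk: "d + k = prod_list e"
    and c1: "complement d k e phi chi1" and c2: "complement d k e psi chi2"
    and eqv: "(chi1, chi2) \<in> slocc_equiv (k#e)"
  shows "(phi, psi) \<in> slocc_equiv (d#e)"
proof -
  have phiT: "phi \<in> tspace (d#e)" and psiT: "psi \<in> tspace (d#e)"
    using mphi mpsi by (simp_all add: slocc_maximal_def)
  have "slocc_le (d#e) phi psi"
    using complement_equiv_slocc_le[OF phiT psiT _ dk c1 c2 eqv] maximal_rows_indep[OF mpsi] dk by simp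
  moreover from this have "slocc_le (d#e) psi phi" using mphi psiT by (simp add: slocc_maximal_def)
  ultimately show ?thesis using phiT psiT by (simp add: slocc_equiv_def)
qed

section \<open>Transfer of finiteness\<close>

lemma finite_quotient_pullback:
  assumes eqB: "equiv B S" and eqC: "equiv C R"
    and fin: "finite (B // S)" and fAB: "f ` A \<subseteq> B"
    and reflects: "\<And>x y. x \<in> A \<Longrightarrow> y \<in> A \<Longrightarrow> (f x, f y) \<in> S \<Longrightarrow> (x, y) \<in> R"
  shows "finite (A // R)"
proof -
  define g where "g x = S `` {f x}" for x
  define pick where "pick c = (SOME x. x \<in> A \<and> g x = c)" for c
  have "g ` A \<subseteq> B // S" using fAB by (auto simp: g_def quotientI)
  then have "finite (g ` A)" using fin finite_subset by blast
  have "R `` {x} = R `` {pick (g x)}" if "x \<in> A" for x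
  proof -
    have "\<exists>y. y \<in> A \<and> g y = g x" using that by blast
    then have p: "pick (g x) \<in> A \<and> g (pick (g x)) = g x"
      unfolding pick_def by (rule someI_ex)
    then have "(f x, f (pick (g x))) \<in> S"
      using eq_equiv_class_iff[OF eqB] fAB that by (auto simp: g_def)
    then have "(x, pick (g x)) \<in> R" using reflects that p by blast
    then show ?thesis using equiv_class_eq[OF eqC] by blast
  qed
  then have "A // R \<subseteq> (\<lambda>c. R `` {pick c}) ` g ` A"
    by (auto simp: quotient_def)
  then show ?thesis using \<open>finite (g ` A)\<close> finite_surj by blast
qed

theorem mainTheorem11:
  fixes K k d1 :: nat and ds :: "nat list"
  assumes "K \<ge> 3"
    and "length ds = K - 1"
    and "\<forall>d\<in>set ds. d \<ge> 2"
    and "k \<ge> 1"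
    and "d1 = prod_list ds - k"
    and "d1 \<ge> 1"
    and "finitely_many_classes (k # ds)"
  shows "finitely_many_maximal_classes (d1 # ds)"
proof -
  have dk: "d1 + k = prod_list ds" using assms(5,6) by simp
  define MX where "MX = {phi. slocc_maximal (d1#ds) phi}"
  have "\<forall>phi\<in>MX. \<exists>chi. complement d1 k ds phi chi"
    using complement_exists dk by (simp add: MX_def)
  then obtain chi where chi: "\<And>phi. phi \<in> MX \<Longrightarrow> complement d1 k ds phi (chi phi)"
    using bchoice[of MX "\<lambda>phi chi. complement d1 k ds phi chi"] by blast
  have "finite (MX // slocc_equiv (d1#ds))"
  proof (rule finite_quotient_pullback[OF equiv_slocc_equiv equiv_slocc_equiv])
    show "finite (tspace (k#ds) // slocc_equiv (k#ds))"
      using assms(7) by (simp add: finitely_many_classes_def)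
    show "chi ` MX \<subseteq> tspace (k#ds)" using chi by (auto simp: complement_def)
    show "(phi, psi) \<in> slocc_equiv (d1#ds)"
      if "phi \<in> MX" "psi \<in> MX" "(chi phi, chi psi) \<in> slocc_equiv (k#ds)" for phi psi
      using maximal_equiv_of_complement_equiv[OF _ _ dk chi chi] that by (simp add: MX_def)
  qed
  then show ?thesis by (simp add: finitely_many_maximal_classes_def MX_def)
qed

end
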